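(* Let $m\ge1$, $0<a_1<\cdots<a_m$ reals, and $f\in\mathbb R_{\ge0}[X]$ with $\mathfrak d(f)\in\{m,m+1\}$. Put $s=\lceil\mathrm{Sign}(f)\rceil^+$ if $\mathfrak d(f)=m$ and $s=\lceil\mathrm{Sign}(f)\rceil$ if $\mathfrak d(f)=m+1$; then $\#\operatorname{supp}(s)=m+1$; write $\operatorname{supp}(s)=\{d_1>\cdots>d_{m+1}\}$. Then there exists $(c_1,\dots,c_{m+1})\in\mathbb R^{m+1}$ with $\sum_{j=1}^{m+1}c_ja_i^{d_j}=0$ for all $i\in[m]$ and $c_1>0$. Fix any such vector, let $h=\sum_{j=1}^{m+1}c_jX^{d_j}$, write $f=\sum_{j=1}^{m+1}e_jX^{d_j}$ (possible since $\operatorname{supp}(\mathrm{Sign} f)\subseteq\operatorname{supp}(s)$), let $t=\min_{1\le i\le\lfloor (m+1)/2\rfloor}|e_{2i}/c_{2i}|$ and $g=f+th$. Then: (0) $g\in\mathbb R_{\ge0}[X]$ (and $c_{2i}\neq 0$ for all relevant $i$); (1) $g(a_i)=f(a_i)$ for all $i\in[m]$; (2) with $s'=\mathrm{Sign}(g)$: $\operatorname{supp}(s')\subsetneq\operatorname{supp}(s)$ and $\operatorname{supp}(s)\setminus\operatorname{supp}(s')\subseteq\{d_{2i}:1\le 2i\le m+1\}$; in particular $\mathrm{Sign}(f)\preceq s\prec s'$, $\mathfrak d(s')=\mathfrak d(s)=m+1$, and $\#\operatorname{supp}(s')\le m$; (3) $g(a)>f(a)$ for all $a>a_m$; (4) $\mathrm{Sign}((1-u)f+ug)=s$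 for all $0<u<1$.
   Context: $\mathbb R_{\ge0}[X]$: real polynomials with nonnegative coefficients. $\omega=\{0,1,\dots\}$, $[m]=\{1,\dots,m\}$. A finite sign sequence is $s\in\{-,0,+\}^\omega$ with finitely many nonzero entries; $\mathscr S$ their set; $\operatorname{supp}(s)=\{i:s_i\ne0\}$; $\mathscr S_+=\mathscr S\cap\{0,+\}^\omega$; $\mathrm{Sign}(f)$ is the sign sequence of the coefficients of $f$. $\mathrm{SC}(t)$ = number of pairs $i<j$ with $\{t_i,t_j\}=\{-,+\}$ and $t_k=0$ for $i<k<j$. $\mathfrak d(s)=\max\{\mathrm{SC}(t):t\in\mathscr S,\ t_i\in\{-,0,s_i\}\ \forall i\}$, $\mathfrak d(f)=\mathfrak d(\mathrm{Sign} f)$. $\mathscr S_+^\circ=\{s\in\mathscr S_+:\mathfrak d(s)=\#\operatorname{supp}(s)\}$. Interval decomposition of $s\in\mathscr S_+$: $\operatorname{supp}(s)=X_0\amalg\cdots\amalg X_k$ into intervals with $0\in X_0$ if $0\in\operatorname{supp}(s)$ else $X_0=\emptyset$, $X_i\neq\emptyset$ for $i\in[k]$, $\min X_i-\max X_{i-1}\ge2$ ($\max\emptyset=-\infty$). $\lfloor X_i\rfloor=\{\min X_i-1\}\amalg X_i$ if $\#X_i$ odd, else $X_i$; $\lceil X_i\rceil=X_i\amalg\{\max X_i+1\}$ if $\#X_i$ odd, else $X_i$; $\operatorname{supp}(\lfloor s\rfloor)=X_0\amalg\lfloor X_1\rfloor\amalg\cdots\amalg\lfloor X_k\rfloor$,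 $\operatorname{supp}(\lceil s\rceil)=X_0\amalg\lceil X_1\rceil\amalg\cdots\amalg\lceil X_k\rceil$. For $u\in\mathscr S_+$, $\operatorname{supp}(u^+)=\operatorname{supp}(u)\cup\{\min\{i:u_i=0\}\}$. On $\mathscr S_+^\circ$: $s\preceq_0 s'$ iff, with supports $\{d_1>\cdots>d_m\}$, $\{d'_1>\cdots>d'_{m'}\}$, $m\le m'$ and $d_i\le d'_i$ for $i\in[m]$. On $\mathscr S_+$: $s\preceq s'$ iff $s=s'$, or $s\ne s'$ and $\lceil s\rceil\preceq_0\lfloor s'\rfloor$; $s\prec s'$ means $s\preceq s'$, $s\neq s'$. *)

theory Defs
  imports "HOL-Computational_Algebra.Polynomial"
begin

datatype sgnsym = Neg | Zer | Pos

definition ssupp :: "(nat \<Rightarrow> sgnsym) \<Rightarrow> nat set" where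
  "ssupp t = {i. t i \<noteq> Zer}"

definition SS :: "(nat \<Rightarrow> sgnsym) set" where
  "SS = {t. finite (ssupp t)}"

definition SSplus :: "(nat \<Rightarrow> sgnsym) set" where
  "SSplus = {t. t \<in> SS \<and> (\<forall>i. t i \<in> {Zer, Pos})}"

definition Sign :: "real poly \<Rightarrow> nat \<Rightarrow> sgnsym" where
  "Sign f = (\<lambda>i. if coeff f i > 0 then Pos else if coeff f i < 0 then Neg else Zer)"

definition nonneg_poly :: "real poly \<Rightarrow> bool" where
  "nonneg_poly f \<longleftrightarrow> (\<forall>i. coeff f i \<ge> 0)"

definition SC :: "(nat \<Rightarrow> sgnsym) \<Rightarrow> nat" where
  "SC t = card {(i, j). i < j \<and> {t i, t j} = {Neg, Pos} \<and> (\<forall>k. i < k \<and> k < j \<longrightarrow> t k = Zer)}"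

definition dd :: "(nat \<Rightarrow> sgnsym) \<Rightarrow> nat" where
  "dd s = Max {SC t | t. t \<in> SS \<and> (\<forall>i. t i \<in> {Neg, Zer, s i})}"

definition ddpoly :: "real poly \<Rightarrow> nat" where
  "ddpoly f = dd (Sign f)"

definition SSplus_circ :: "(nat \<Rightarrow> sgnsym) set" where
  "SSplus_circ = {s. s \<in> SSplus \<and> dd s = card (ssupp s)}"

definition of_supp :: "nat set \<Rightarrow> nat \<Rightarrow> sgnsym" where
  "of_supp A = (\<lambda>i. if i \<in> A then Pos else Zer)"

text \<open>Interval decomposition: the maximal intervals (runs) of the support.
  The run containing 0 (if any) is X_0; the others are X_1, ..., X_k.\<close>
definition runs :: "(nat \<Rightarrow> sgnsym) \<Rightarrow> nat set set" where
  "runs s = {{a..b} | a b. a \<le> b \<and> {a..b} \<subseteq> ssupp s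
               \<and> (0 < a \<longrightarrow> a - 1 \<notin> ssupp s) \<and> b + 1 \<notin> ssupp s}"

definition floorI :: "nat set \<Rightarrow> nat set" where
  "floorI X = (if 0 \<in> X then X else if odd (card X) then insert (Min X - 1) X else X)"

definition ceilI :: "nat set \<Rightarrow> nat set" where
  "ceilI X = (if 0 \<in> X then X else if odd (card X) then insert (Max X + 1) X else X)"

definition sfloor :: "(nat \<Rightarrow> sgnsym) \<Rightarrow> nat \<Rightarrow> sgnsym" where
  "sfloor s = of_supp (\<Union>X \<in> runs s. floorI X)"

definition sceil :: "(nat \<Rightarrow> sgnsym) \<Rightarrow> nat \<Rightarrow> sgnsym" where
  "sceil s = of_supp (\<Union>X \<in> runs s. ceilI X)"

definition splus :: "(nat \<Rightarrow> sgnsym) \<Rightarrow> nat \<Rightarrow> sgnsym" where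
  "splus u = of_supp (ssupp u \<union> {LEAST i. u i = Zer})"

text \<open>Support listed in decreasing order d_1 > d_2 > ... (0-indexed list).\<close>
definition dec_supp :: "(nat \<Rightarrow> sgnsym) \<Rightarrow> nat list" where
  "dec_supp s = rev (sorted_list_of_set (ssupp s))"

definition preceq0 :: "(nat \<Rightarrow> sgnsym) \<Rightarrow> (nat \<Rightarrow> sgnsym) \<Rightarrow> bool" where
  "preceq0 s s' \<longleftrightarrow> s \<in> SSplus_circ \<and> s' \<in> SSplus_circ \<and>
     length (dec_supp s) \<le> length (dec_supp s') \<and>
     (\<forall>i < length (dec_supp s). dec_supp s ! i \<le> dec_supp s' ! i)"

definition spreceq :: "(nat \<Rightarrow> sgnsym) \<Rightarrow> (nat \<Rightarrow> sgnsym) \<Rightarrow> bool" where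
  "spreceq s s' \<longleftrightarrow> s \<in> SSplus \<and> s' \<in> SSplus \<and>
     (s = s' \<or> (s \<noteq> s' \<and> preceq0 (sceil s) (sfloor s')))"

definition sprec :: "(nat \<Rightarrow> sgnsym) \<Rightarrow> (nat \<Rightarrow> sgnsym) \<Rightarrow> bool" where
  "sprec s s' \<longleftrightarrow> spreceq s s' \<and> s \<noteq> s'"

end

theory Submission
  imports Defs
begin

(* Descartes' rule of signs bounds the number of positive roots of h = sum c_j X^(d_j) by its number
   of sign changes, which is at most m. As h vanishes at the m positive nodes a_i, its coefficients
   alternate in sign and h has no other positive root; since c_1 > 0, h > 0 beyond a_m. The largest t
   for which f + t h stays nonnegative cancels the coefficients of f exactly at the even positions
   d_(2i) where the minimum defining t is attained; the values at the nodes do not change and the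
   polynomial grows beyond a_m.
   Combinatorially, dd(s) is the total weight of the runs of supp s, where a run not containing 0
   counts its length rounded up to an even number. The supports produced by the ceiling and by the +
   operation are paired: read from the top they split into pairs of neighbours, so the ceiling fixes
   them. Removing elements of even rank from the top of a paired set leaves a set whose floor is the
   paired set again, which gives s < s' and dd(s') = dd(s) = m + 1. *)

section \<open>Polynomials as sums of monomials\<close>

lemma coeff_sum_monom_inj:
  fixes b :: "'i \<Rightarrow> 'a::comm_monoid_add"
  assumes "finite I" "inj_on e I" "k \<in> I"
  shows "coeff (\<Sum>j\<in>I. monom (b j) (e j)) (e k) = b k"
proof -
  have "coeff (\<Sum>j\<in>I. monom (b j) (e j)) (e k) = (\<Sum>j\<in>I. if j = k then b j else 0)"
    unfolding coeff_sum coeff_monom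
    by (rule sum.cong) (use assms in \<open>auto dest: inj_onD\<close>)
  also have "\<dots> = b k" using assms by simp
  finally show ?thesis .
qed

lemma coeff_sum_monom_notin:
  fixes b :: "'i \<Rightarrow> 'a::comm_monoid_add"
  shows "n \<notin> e ` I \<Longrightarrow> coeff (\<Sum>j\<in>I. monom (b j) (e j)) n = 0"
  by (auto simp: coeff_sum coeff_monom intro!: sum.neutral)

lemma poly_sum_monom:
  fixes b :: "'i \<Rightarrow> 'a::comm_semiring_1"
  shows "poly (\<Sum>j\<in>I. monom (b j) (e j)) x = (\<Sum>j\<in>I. b j * x ^ e j)"
  by (simp add: poly_sum poly_monom)

lemma poly_eq_sum_monom_coeff:
  fixes p :: "'a::comm_monoid_add poly"
  assumes "finite J" "inj_on d J" "\<And>n. coeff p n \<noteq> 0 \<Longrightarrow> n \<in> d ` J"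
  shows "p = (\<Sum>j\<in>J. monom (coeff p (d j)) (d j))"
proof (rule poly_eqI)
  fix n
  show "coeff p n = coeff (\<Sum>j\<in>J. monom (coeff p (d j)) (d j)) n"
  proof (cases "n \<in> d ` J")
    case True
    then obtain j where "j \<in> J" "n = d j" by blast
    thus ?thesis using coeff_sum_monom_inj[OF assms(1,2) \<open>j \<in> J\<close>, of "\<lambda>j. coeff p (d j)"] by simp
  next
    case False
    hence "coeff p n = 0" using assms(3) by blast
    thus ?thesis using coeff_sum_monom_notin[OF False] by simp
  qed
qed

lemma finite_nonzero_coeffs: "finite {n. coeff p n \<noteq> 0}"
  by (rule finite_subset[of _ "{..degree p}"]) (auto intro: le_degree)

section \<open>Descartes' rule of signs\<close>

definition sparse_poly :: "(nat \<Rightarrow> nat) \<Rightarrow> (nat \<Rightarrow> real) \<Rightarrow> nat \<Rightarrow> real poly" where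
  "sparse_poly e b K = (\<Sum>k<K. monom (b k) (e k))"

definition sign_changes :: "(nat \<Rightarrow> real) \<Rightarrow> nat \<Rightarrow> nat" where
  "sign_changes b K = (\<Sum>k<K-1. if b k * b (Suc k) < 0 then 1 else 0)"

lemma sign_changes_le: "sign_changes b K \<le> K - 1"
proof -
  have "sign_changes b K \<le> (\<Sum>k<K-1. (1::nat))" unfolding sign_changes_def by (rule sum_mono) auto
  thus ?thesis by simp
qed

lemma sign_changes_Suc_Suc:
  "sign_changes b (Suc (Suc K)) = (if b 0 * b 1 < 0 then 1 else 0) + sign_changes (\<lambda>k. b (Suc k)) (Suc K)"
  by (simp only: sign_changes_def diff_Suc_1 sum.lessThan_Suc_shift) simp

lemma sign_changes_scale:
  assumes "\<And>k. k < K \<Longrightarrow> 0 < w k"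
  shows "sign_changes (\<lambda>k. w k * b k) K = sign_changes b K"
  unfolding sign_changes_def
proof (rule sum.cong)
  fix k assume "k \<in> {..<K-1}"
  hence pos: "0 < w k * w (Suc k)" using assms by simp
  have "w k * b k * (w (Suc k) * b (Suc k)) = (w k * w (Suc k)) * (b k * b (Suc k))"
    by (simp add: algebra_simps)
  hence "(w k * b k * (w (Suc k) * b (Suc k)) < 0) = (b k * b (Suc k) < 0)"
    by (metis mult_less_cancel_left_pos[OF pos] mult_zero_right)
  thus "(if w k * b k * (w (Suc k) * b (Suc k)) < 0 then 1 else 0)
      = (if b k * b (Suc k) < 0 then 1 else (0::nat))" by simp
qed simp

lemma sign_changes_maximal:
  assumes "K \<le> sign_changes b (Suc K)" "k < K"
  shows "b k * b (Suc k) < 0"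
proof -
  have "sign_changes b (Suc K) = card {k\<in>{..<K}. b k * b (Suc k) < 0}"
    unfolding sign_changes_def by (simp add: sum.If_cases Int_def conj_commute)
  hence "{k\<in>{..<K}. b k * b (Suc k) < 0} = {..<K}"
    using assms(1) card_mono[of "{..<K}" "{k\<in>{..<K}. b k * b (Suc k) < 0}"]
    by (intro card_subset_eq) auto
  thus ?thesis using assms(2) by blast
qed

lemma coeff_sparse_poly:
  "strict_mono_on {..<K} e \<Longrightarrow> k < K \<Longrightarrow> coeff (sparse_poly e b K) (e k) = b k"
  unfolding sparse_poly_def by (rule coeff_sum_monom_inj) (auto dest: strict_mono_on_imp_inj_on)

lemma sparse_poly_nonzero:
  "strict_mono_on {..<K} e \<Longrightarrow> 0 < K \<Longrightarrow> b 0 \<noteq> 0 \<Longrightarrow> sparse_poly e b K \<noteq> 0"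
  using coeff_sparse_poly[of K e 0 b] by auto

lemma strict_mono_on_lessThan_ge_0:
  fixes e :: "nat \<Rightarrow> nat"
  shows "strict_mono_on {..<K} e \<Longrightarrow> k < K \<Longrightarrow> e 0 \<le> e k"
  using strict_mono_on_leD[of "{..<K}" e 0 k] by auto

lemma strict_mono_on_shift:
  fixes e :: "nat \<Rightarrow> nat"
  assumes "strict_mono_on {..<K} e"
  shows "strict_mono_on {..<K} (\<lambda>k. e k - e 0)"
proof (rule strict_mono_onI)
  fix i j assume "i \<in> {..<K}" "j \<in> {..<K}" "i < j"
  hence "e i < e j" "e 0 \<le> e i"
    using strict_mono_onD[OF assms] strict_mono_on_lessThan_ge_0[OF assms] by auto
  thus "e i - e 0 < e j - e 0" by linarith
qed

lemma poly_sparse_poly_shift: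
  assumes "\<And>k. k < K \<Longrightarrow> e0 \<le> e k"
  shows "poly (sparse_poly e b K) x = x ^ e0 * poly (sparse_poly (\<lambda>k. e k - e0) b K) x"
  unfolding sparse_poly_def poly_sum_monom sum_distrib_left
proof (rule sum.cong)
  fix k assume "k \<in> {..<K}"
  hence "x ^ e k = x ^ e0 * x ^ (e k - e0)" using assms by (simp flip: power_add)
  thus "b k * x ^ e k = x ^ e0 * (b k * x ^ (e k - e0))" by simp
qed simp

lemma pderiv_sum: "pderiv (sum f A) = (\<Sum>x\<in>A. pderiv (f x))"
  using higher_pderiv_sum[of 1 f A] by simp

lemma pderiv_sparse_poly:
  assumes "e 0 = 0"
  shows "pderiv (sparse_poly e b (Suc K))
    = sparse_poly (\<lambda>k. e (Suc k) - 1) (\<lambda>k. of_nat (e (Suc k)) * b (Suc k)) K"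
  unfolding sparse_poly_def sum.lessThan_Suc_shift pderiv_add pderiv_sum pderiv_monom
  by (simp add: assms)

lemma sparse_poly_sign_near_0:
  assumes e: "strict_mono_on {..<K} e" and "0 < K" "b 0 \<noteq> 0"
  shows "\<exists>\<delta>>0. \<forall>x. 0 < x \<and> x < \<delta> \<longrightarrow> 0 < b 0 * poly (sparse_poly e b K) x"
proof -
  define q where "q = sparse_poly (\<lambda>k. e k - e 0) b K"
  have "poly q 0 = b 0"
    using coeff_sparse_poly[OF strict_mono_on_shift[OF e] \<open>0 < K\<close>] by (simp add: q_def poly_0_coeff_0)
  hence "0 < b 0 * poly q 0" using \<open>b 0 \<noteq> 0\<close> by (metis not_real_square_gt_zero)
  moreover have "isCont (\<lambda>x. b 0 * poly q x) 0" by simp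
  ultimately have "\<forall>\<^sub>F x in at 0. 0 < b 0 * poly q x"
    unfolding isCont_def using order_tendstoD(1) by blast
  then obtain \<delta> where \<delta>: "\<delta> > 0" "\<And>x. x \<noteq> 0 \<Longrightarrow> dist x 0 < \<delta> \<Longrightarrow> 0 < b 0 * poly q x"
    unfolding eventually_at by blast
  have "0 < b 0 * poly (sparse_poly e b K) x" if "0 < x" "x < \<delta>" for x
  proof -
    have "poly (sparse_poly e b K) x = x ^ e 0 * poly q x"
      unfolding q_def by (rule poly_sparse_poly_shift) (rule strict_mono_on_lessThan_ge_0[OF e])
    moreover have "0 < b 0 * poly q x" using \<delta>(2)[of x] that by simp
    ultimately show ?thesis using that by (simp add: mult.left_commute[of "b 0"])
  qed
  thus ?thesis using \<delta>(1) by blast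
qed

lemma card_roots_le_Suc_card_pderiv_roots:
  fixes p :: "real poly"
  assumes fin: "finite R" and ne: "R \<noteq> {}" and roots: "\<And>x. x \<in> R \<Longrightarrow> poly p x = 0"
    and nz: "pderiv p \<noteq> 0"
  shows "card R \<le> card {x. Min R < x \<and> x < Max R \<and> poly (pderiv p) x = 0} + 1"
proof -
  define T where "T = {x. Min R < x \<and> x < Max R \<and> poly (pderiv p) x = 0}"
  define next_root where "next_root r = Min {y\<in>R. y > r}" for r
  have next_root: "next_root r \<in> R \<and> r < next_root r \<and> (\<forall>y\<in>R. r < y \<longrightarrow> next_root r \<le> y)"
    if "r \<in> R" "r \<noteq> Max R" for r
  proof -
    have "r < Max R" using that fin by (meson Max_ge order_le_neq_trans)
    hence ne': "{y\<in>R. y > r} \<noteq> {}" using fin ne Max_in by blast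
    have fin': "finite {y\<in>R. y > r}" using fin by simp
    show ?thesis unfolding next_root_def using Min_in[OF fin' ne'] Min_le[OF fin'] by auto
  qed
  have "\<exists>z. r < z \<and> z < next_root r \<and> poly (pderiv p) z = 0" if "r \<in> R" "r \<noteq> Max R" for r
  proof -
    from next_root[OF that] have "r < next_root r" "next_root r \<in> R" by auto
    from poly_MVT[OF this(1), of p] obtain z where "r < z" "z < next_root r"
      "poly p (next_root r) - poly p r = (next_root r - r) * poly (pderiv p) z" by auto
    thus ?thesis using roots \<open>next_root r \<in> R\<close> that \<open>r < next_root r\<close> by auto
  qed
  then obtain \<xi> where \<xi>: "\<And>r. r \<in> R \<Longrightarrow> r \<noteq> Max R \<Longrightarrow>
      r < \<xi> r \<and> \<xi> r < next_root r \<and> poly (pderiv p) (\<xi> r) = 0"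
    by (metis (lifting))
  have "inj_on \<xi> (R - {Max R})"
  proof (rule inj_onI)
    fix r1 r2 assume r: "r1 \<in> R - {Max R}" "r2 \<in> R - {Max R}" "\<xi> r1 = \<xi> r2"
    show "r1 = r2"
    proof (rule ccontr)
      assume "r1 \<noteq> r2"
      then consider "r1 < r2" | "r2 < r1" by linarith
      then show False
      proof cases
        case 1
        hence "next_root r1 \<le> r2" using next_root[of r1] r by auto
        then show False using \<xi>[of r1] \<xi>[of r2] r by auto
      next
        case 2
        hence "next_root r2 \<le> r1" using next_root[of r2] r by auto
        then show False using \<xi>[of r1] \<xi>[of r2] r by auto
      qed
    qed
  qed
  moreover have "\<xi> ` (R - {Max R}) \<subseteq> T"
  proof
    fix y assume "y \<in> \<xi> ` (R - {Max R})"
    then obtain r where r: "r \<in> R" "r \<noteq> Max R" "y = \<xi> r" by auto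
    have "Min R \<le> r" "next_root r \<le> Max R" using fin r next_root[OF r(1,2)] by auto
    thus "y \<in> T" using \<xi>[OF r(1,2)] r unfolding T_def by auto
  qed
  moreover have "finite T"
    unfolding T_def using poly_roots_finite[OF nz] by (rule rev_finite_subset) auto
  ultimately have "card (R - {Max R}) \<le> card T" by (rule card_inj_on_le)
  moreover have "card R = card (R - {Max R}) + 1"
    using card_Suc_Diff1[OF fin Max_in[OF fin ne]] by simp
  ultimately show ?thesis unfolding T_def by linarith
qed

lemma pderiv_root_below_root:
  fixes p :: "real poly"
  assumes p0: "0 < \<sigma> * poly p 0" and "\<delta> > 0"
    and near_0: "\<And>x. 0 < x \<Longrightarrow> x < \<delta> \<Longrightarrow> 0 < \<sigma> * poly (pderiv p) x"
    and r: "0 < r" "poly p r = 0"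
  shows "\<exists>\<rho>. 0 < \<rho> \<and> \<rho> < r \<and> poly (pderiv p) \<rho> = 0"
proof -
  obtain \<xi> where \<xi>: "0 < \<xi>" "\<xi> < r" "poly p r - poly p 0 = r * poly (pderiv p) \<xi>"
    using poly_MVT[OF r(1), of p] by auto
  have "r * poly (pderiv p) \<xi> = - poly p 0" using \<xi>(3) r(2) by simp
  hence "r * (\<sigma> * poly (pderiv p) \<xi>) = - (\<sigma> * poly p 0)"
    by (simp add: mult.left_commute[of r \<sigma>])
  hence "r * (\<sigma> * poly (pderiv p) \<xi>) < 0" using p0 by linarith
  hence neg: "\<sigma> * poly (pderiv p) \<xi> < 0" using r(1) by (simp add: mult_less_0_iff)
  define x0 where "x0 = min (\<delta>/2) (\<xi>/2)"
  have x0: "0 < x0" "x0 < \<delta>" "x0 < \<xi>" unfolding x0_def using \<open>\<delta> > 0\<close> \<xi> by auto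
  have "(\<sigma> * poly (pderiv p) x0) * (\<sigma> * poly (pderiv p) \<xi>) < 0"
    using near_0[OF x0(1,2)] neg by (simp add: mult_pos_neg)
  hence "(\<sigma> * \<sigma>) * (poly (pderiv p) x0 * poly (pderiv p) \<xi>) < 0"
    by (simp add: algebra_simps)
  hence "poly (pderiv p) x0 * poly (pderiv p) \<xi> < 0"
    using mult_less_cancel_left_pos[of "\<sigma> * \<sigma>" _ 0] not_real_square_gt_zero[of \<sigma>] p0 by force
  from poly_IVT[OF x0(3) this] obtain \<rho> where "x0 < \<rho>" "\<rho> < \<xi>" "poly (pderiv p) \<rho> = 0"
    by auto
  thus ?thesis using x0 \<xi> by (intro exI[of _ \<rho>]) auto
qed

text \<open>The inductive step of Descartes' rule: Rolle's theorem between consecutive positive roots of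
  \<open>p\<close>, and one more root of \<open>p'\<close> before the first one when \<open>p(0)\<close> has the sign of \<open>p'\<close> near \<open>0\<close>.\<close>

lemma card_pos_roots_le_card_pos_roots_pderiv:
  fixes p :: "real poly"
  assumes p': "pderiv p \<noteq> 0" and "\<delta> > 0"
    and near_0: "\<And>x. 0 < x \<Longrightarrow> x < \<delta> \<Longrightarrow> 0 < \<sigma> * poly (pderiv p) x"
  shows "card {x. 0 < x \<and> poly p x = 0}
    \<le> (if 0 < \<sigma> * poly p 0 then 0 else 1) + card {x. 0 < x \<and> poly (pderiv p) x = 0}"
proof -
  define R where "R = {x. 0 < x \<and> poly p x = 0}"
  define R' where "R' = {x. 0 < x \<and> poly (pderiv p) x = 0}"
  have "p \<noteq> 0" using p' by auto
  hence fin_R: "finite R" unfolding R_def using poly_roots_finite[of p] by (auto intro: rev_finite_subset)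
  have fin_R': "finite R'" unfolding R'_def using poly_roots_finite[OF p'] by (auto intro: rev_finite_subset)
  show ?thesis
  proof (cases "R = {}")
    case False
    define T where "T = {x. Min R < x \<and> x < Max R \<and> poly (pderiv p) x = 0}"
    have Rolle: "card R \<le> card T + 1" unfolding T_def
      by (rule card_roots_le_Suc_card_pderiv_roots[OF fin_R False _ p']) (simp add: R_def)
    have Min_R: "0 < Min R" "poly p (Min R) = 0"
      using Min_in[OF fin_R False] by (auto simp: R_def)
    have "T \<subseteq> R'" unfolding T_def R'_def using Min_R by auto
    have "card R \<le> (if 0 < \<sigma> * poly p 0 then 0 else 1) + card R'"
    proof (cases "0 < \<sigma> * poly p 0")
      case True
      then obtain \<rho> where \<rho>: "0 < \<rho>" "\<rho> < Min R" "poly (pderiv p) \<rho> = 0"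
        using pderiv_root_below_root[of \<sigma> p \<delta> "Min R"] \<open>\<delta> > 0\<close> near_0 Min_R by blast
      hence "insert \<rho> T \<subseteq> R'" "\<rho> \<notin> T" using \<open>T \<subseteq> R'\<close> unfolding R'_def T_def by auto
      moreover have "finite T" using finite_subset[OF \<open>T \<subseteq> R'\<close> fin_R'] .
      ultimately have "card T + 1 \<le> card R'"
        using card_mono[OF fin_R', of "insert \<rho> T"] by simp
      thus ?thesis using Rolle True by simp
    next
      case False
      thus ?thesis using Rolle card_mono[OF fin_R' \<open>T \<subseteq> R'\<close>] by simp
    qed
    thus ?thesis unfolding R_def R'_def .
  next
    case True
    thus ?thesis unfolding R_def[symmetric] R'_def[symmetric] by simp
  qed
qed

theorem descartes_rule_of_signs:
  assumes "strict_mono_on {..<K} e" and "\<And>k. k < K \<Longrightarrow> b k \<noteq> 0"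
  shows "card {x::real. 0 < x \<and> poly (sparse_poly e b K) x = 0} \<le> sign_changes b K"
  using assms
proof (induction K arbitrary: e b)
  case 0
  have "infinite {x::real. 0 < x}" using infinite_Ioi[of 0] by (simp add: greaterThan_def)
  then show ?case by (simp add: sparse_poly_def)
next
  case (Suc K)
  show ?case
  proof (cases "K = 0")
    case True
    hence "{x::real. 0 < x \<and> poly (sparse_poly e b (Suc K)) x = 0} = {}"
      using Suc.prems(2) by (auto simp: sparse_poly_def poly_monom)
    thus ?thesis by (metis card.empty le0)
  next
    case False
    then obtain K' where K': "K = Suc K'" using not0_implies_Suc by blast
    define e' where "e' k = e k - e 0" for k
    have e': "strict_mono_on {..<Suc K} e'" "e' 0 = 0"
      unfolding e'_def using strict_mono_on_shift[OF Suc.prems(1)] by auto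
    have e'_pos: "0 < e' (Suc k)" if "k < K" for k
      using strict_mono_onD[OF e'(1), of 0 "Suc k"] that e'(2) by auto
    define p where "p = sparse_poly e' b (Suc K)"
    have roots_eq: "{x. 0 < x \<and> poly (sparse_poly e b (Suc K)) x = 0} = {x. 0 < x \<and> poly p x = 0}"
      unfolding p_def e'_def
      using poly_sparse_poly_shift[OF strict_mono_on_lessThan_ge_0[OF Suc.prems(1)], where b=b] by auto
    define e2 where "e2 k = e' (Suc k) - 1" for k
    define b2 where "b2 k = real (e' (Suc k)) * b (Suc k)" for k
    have p': "pderiv p = sparse_poly e2 b2 K"
      unfolding p_def e2_def b2_def by (rule pderiv_sparse_poly[where e = e', OF e'(2)])
    have e2: "strict_mono_on {..<K} e2"
    proof (rule strict_mono_onI)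
      fix i j assume "i \<in> {..<K}" "j \<in> {..<K}" "i < j"
      thus "e2 i < e2 j"
        using strict_mono_onD[OF e'(1), of "Suc i" "Suc j"] e'_pos[of i] unfolding e2_def by auto
    qed
    have b2: "b2 k \<noteq> 0" if "k < K" for k
      unfolding b2_def using Suc.prems(2)[of "Suc k"] e'_pos[OF that] that by simp
    have "pderiv p \<noteq> 0" unfolding p' using sparse_poly_nonzero[OF e2] b2 K' by simp
    moreover obtain \<delta> where "\<delta> > 0" "\<And>x. 0 < x \<Longrightarrow> x < \<delta> \<Longrightarrow> 0 < b2 0 * poly (pderiv p) x"
      using sparse_poly_sign_near_0[OF e2, of b2] b2 K' unfolding p' by auto
    ultimately have "card {x. 0 < x \<and> poly p x = 0}
        \<le> (if 0 < b2 0 * poly p 0 then 0 else 1) + card {x. 0 < x \<and> poly (sparse_poly e2 b2 K) x = 0}"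
      unfolding p' [symmetric] by (rule card_pos_roots_le_card_pos_roots_pderiv)
    also have "\<dots> \<le> (if 0 < b2 0 * poly p 0 then 0 else 1) + sign_changes b2 K"
      using Suc.IH[OF e2] b2 by simp
    also have "sign_changes b2 K = sign_changes (\<lambda>k. b (Suc k)) K"
      unfolding b2_def by (rule sign_changes_scale) (use e'_pos in simp)
    also have "(if 0 < b2 0 * poly p 0 then 0 else 1) = (if b 0 * b 1 < 0 then 1 else (0::nat))"
    proof -
      have "poly p 0 = b 0"
        using coeff_sparse_poly[OF e'(1), of 0 b] e'(2) by (simp add: poly_0_coeff_0 p_def)
      hence "b2 0 * poly p 0 = real (e' 1) * (b 0 * b 1)"
        unfolding b2_def One_nat_def by (simp only: mult_ac)
      moreover have "b 0 * b 1 \<noteq> 0" using Suc.prems(2)[of 0] Suc.prems(2)[of 1] K' by simp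
      moreover have "0 < real (e' 1)" using e'_pos[of 0] K' by simp
      ultimately show ?thesis
        using mult_pos_pos[of "real (e' 1)" "b 0 * b 1"] mult_pos_neg[of "real (e' 1)" "b 0 * b 1"]
        by (smt (verit))
    qed
    finally show ?thesis unfolding roots_eq using K' sign_changes_Suc_Suc[of b K'] by simp
  qed
qed

lemma poly_eq_sparse_poly_sorted_coeffs:
  fixes p :: "real poly"
  defines "L \<equiv> sorted_list_of_set {n. coeff p n \<noteq> 0}"
  shows "p = sparse_poly (\<lambda>k. L ! k) (\<lambda>k. coeff p (L ! k)) (length L)"
proof (rule poly_eqI)
  fix n
  have L: "sorted_wrt (<) L" "set L = {n. coeff p n \<noteq> 0}"
    unfolding L_def using finite_nonzero_coeffs[of p] by auto
  have mono: "strict_mono_on {..<length L} (\<lambda>k. L ! k)"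
    by (rule strict_mono_onI) (use L(1) sorted_wrt_nth_less in auto)
  show "coeff p n = coeff (sparse_poly (\<lambda>k. L ! k) (\<lambda>k. coeff p (L ! k)) (length L)) n"
  proof (cases "n \<in> set L")
    case True
    then obtain k where "k < length L" "n = L ! k" by (auto simp: in_set_conv_nth)
    thus ?thesis using coeff_sparse_poly[OF mono] by simp
  next
    case False
    hence "n \<notin> (\<lambda>k. L ! k) ` {..<length L}" by (auto simp: in_set_conv_nth)
    thus ?thesis using False L(2) unfolding sparse_poly_def by (simp add: coeff_sum_monom_notin)
  qed
qed

corollary card_pos_roots_less_card_nonzero_coeffs:
  fixes p :: "real poly"
  assumes "p \<noteq> 0" and "\<And>x. x \<in> A \<Longrightarrow> 0 < x \<and> poly p x = 0"
  shows "card A < card {n. coeff p n \<noteq> 0}"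
proof -
  define L where "L = sorted_list_of_set {n. coeff p n \<noteq> 0}"
  have L: "sorted_wrt (<) L" "set L = {n. coeff p n \<noteq> 0}" "length L = card {n. coeff p n \<noteq> 0}"
    unfolding L_def using finite_nonzero_coeffs[of p] by auto
  have "coeff p (degree p) \<noteq> 0" using assms(1) by simp
  hence "0 < length L" using L(2) by (metis length_pos_if_in_set mem_Collect_eq)
  have "card A \<le> card {x. 0 < x \<and> poly p x = 0}"
    using assms poly_roots_finite[OF assms(1)] by (intro card_mono) (auto intro: rev_finite_subset)
  also have "\<dots> \<le> sign_changes (\<lambda>k. coeff p (L ! k)) (length L)"
  proof -
    have "strict_mono_on {..<length L} (\<lambda>k. L ! k)"
      by (rule strict_mono_onI) (use L(1) sorted_wrt_nth_less in auto)
    moreover have "coeff p (L ! k) \<noteq> 0" if "k < length L" for k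
      using L(2) that nth_mem by blast
    ultimately show ?thesis
      using descartes_rule_of_signs poly_eq_sparse_poly_sorted_coeffs[of p, folded L_def]
      by metis
  qed
  also have "\<dots> < card {n. coeff p n \<noteq> 0}"
    using sign_changes_le[of "\<lambda>k. coeff p (L ! k)" "length L"] \<open>0 < length L\<close> L(3) by linarith
  finally show ?thesis .
qed

lemma exists_poly_vanishing_on:
  fixes A :: "real set" and D :: "nat set"
  assumes "finite A" and "finite D" and "card D = Suc (card A)" and "\<And>x. x \<in> A \<Longrightarrow> 0 < x"
  shows "\<exists>h. h \<noteq> 0 \<and> {n. coeff h n \<noteq> 0} \<subseteq> D \<and> (\<forall>x\<in>A. poly h x = 0)"
  using assms
proof (induction A arbitrary: D rule: finite_induct)
  case empty
  then obtain d where "D = {d}" by (auto simp: card_Suc_eq)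
  thus ?case by (intro exI[of _ "monom 1 d"]) (auto simp: coeff_monom)
next
  case (insert a A)
  obtain x where x: "x \<in> D" using insert.prems(2) by fastforce
  have card_D_minus: "card (D - {z}) = Suc (card A)" if "z \<in> D" for z
    using insert.prems(1,2) insert.hyps that by simp
  obtain y where y: "y \<in> D" "y \<noteq> x"
    using card_D_minus[OF x] by (metis Diff_iff card.empty ex_in_conv insertCI nat.distinct(1))
  obtain h1 where h1: "h1 \<noteq> 0" "{n. coeff h1 n \<noteq> 0} \<subseteq> D - {x}" "\<forall>z\<in>A. poly h1 z = 0"
    using insert.IH[of "D - {x}"] insert.prems card_D_minus[OF x] by auto
  obtain h2 where h2: "h2 \<noteq> 0" "{n. coeff h2 n \<noteq> 0} \<subseteq> D - {y}" "\<forall>z\<in>A. poly h2 z = 0"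
    using insert.IH[of "D - {y}"] insert.prems card_D_minus[OF y(1)] by auto
  show ?case
  proof (cases "poly h1 a = 0 \<or> poly h2 a = 0")
    case True
    thus ?thesis using h1 h2 by blast
  next
    case False
    have "coeff h2 x \<noteq> 0"
    proof
      assume "coeff h2 x = 0"
      hence "{n. coeff h2 n \<noteq> 0} \<subseteq> D - {y} - {x}" using h2(2) by auto
      hence "card {n. coeff h2 n \<noteq> 0} \<le> card A"
        using card_mono[of "D - {y} - {x}"] insert.prems(1) card_D_minus[OF y(1)] x y by fastforce
      moreover have "card A < card {n. coeff h2 n \<noteq> 0}"
        using card_pos_roots_less_card_nonzero_coeffs[OF h2(1)] h2(3) insert.prems(3) by blast
      ultimately show False by simp
    qed
    define h where "h = smult (poly h2 a) h1 - smult (poly h1 a) h2"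
    have "coeff h x = - poly h1 a * coeff h2 x" unfolding h_def using h1(2) by auto
    hence "h \<noteq> 0" using False \<open>coeff h2 x \<noteq> 0\<close> by auto
    moreover have "{n. coeff h n \<noteq> 0} \<subseteq> D"
    proof
      fix n assume "n \<in> {n. coeff h n \<noteq> 0}"
      hence "coeff h1 n \<noteq> 0 \<or> coeff h2 n \<noteq> 0" unfolding h_def by auto
      thus "n \<in> D" using h1(2) h2(2) by blast
    qed
    moreover have "\<forall>z\<in>insert a A. poly h z = 0" unfolding h_def using h1(3) h2(3) by auto
    ultimately show ?thesis by blast
  qed
qed

section \<open>The vanishing combination of monomials\<close>

locale nodes_exponents =
  fixes m :: nat and a :: "nat \<Rightarrow> real" and d :: "nat \<Rightarrow> nat"
  assumes m_pos: "m \<ge> 1"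
    and a_1_pos: "0 < a 1"
    and a_increasing: "\<And>i j. 1 \<le> i \<Longrightarrow> i < j \<Longrightarrow> j \<le> m \<Longrightarrow> a i < a j"
    and d_decreasing: "\<And>j k. 1 \<le> j \<Longrightarrow> j < k \<Longrightarrow> k \<le> m + 1 \<Longrightarrow> d k < d j"
begin

definition vanishes :: "(nat \<Rightarrow> real) \<Rightarrow> bool" where
  "vanishes c \<longleftrightarrow> (\<forall>i\<in>{1..m}. (\<Sum>j = 1..m+1. c j * a i ^ d j) = 0)"

definition comb :: "(nat \<Rightarrow> real) \<Rightarrow> real poly" where
  "comb c = (\<Sum>j = 1..m+1. monom (c j) (d j))"

lemma a_pos: "i \<in> {1..m} \<Longrightarrow> 0 < a i"
  using a_1_pos a_increasing[of 1 i] by (cases "i = 1") auto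

lemma a_le_a_m: "i \<in> {1..m} \<Longrightarrow> a i \<le> a m"
  using a_increasing[of i m] by (cases "i = m") auto

lemma card_nodes: "card (a ` {1..m}) = m"
proof -
  have "inj_on a {1..m}"
  proof (rule inj_onI)
    fix i j assume "i \<in> {1..m}" "j \<in> {1..m}" "a i = a j"
    thus "i = j" using a_increasing[of i j] a_increasing[of j i] by (cases i j rule: linorder_cases) auto
  qed
  thus ?thesis by (simp add: card_image)
qed

lemma inj_on_d: "inj_on d {1..m+1}"
proof (rule inj_onI)
  fix j k assume "j \<in> {1..m+1}" "k \<in> {1..m+1}" "d j = d k"
  thus "j = k" using d_decreasing[of j k] d_decreasing[of k j] by (cases j k rule: linorder_cases) auto
qed

lemma d_le_d_1: "j \<in> {1..m+1} \<Longrightarrow> d j \<le> d 1"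
  using d_decreasing[of 1 j] by (cases "j = 1") auto

lemma coeff_comb: "j \<in> {1..m+1} \<Longrightarrow> coeff (comb c) (d j) = c j"
  unfolding comb_def by (rule coeff_sum_monom_inj) (use inj_on_d in auto)

lemma coeff_comb_notin: "n \<notin> d ` {1..m+1} \<Longrightarrow> coeff (comb c) n = 0"
  unfolding comb_def by (rule coeff_sum_monom_notin)

lemma poly_comb: "poly (comb c) x = (\<Sum>j = 1..m+1. c j * x ^ d j)"
  unfolding comb_def by (rule poly_sum_monom)

lemma comb_vanishes_at_nodes: "vanishes c \<Longrightarrow> i \<in> {1..m} \<Longrightarrow> poly (comb c) (a i) = 0"
  unfolding vanishes_def poly_comb by simp

lemma vanishes_coeff_nonzero:
  assumes c: "vanishes c" "comb c \<noteq> 0" and j: "j \<in> {1..m+1}"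
  shows "c j \<noteq> 0"
proof
  assume "c j = 0"
  have "{n. coeff (comb c) n \<noteq> 0} \<subseteq> d ` ({1..m+1} - {j})"
  proof
    fix n assume n: "n \<in> {n. coeff (comb c) n \<noteq> 0}"
    then obtain k where "k \<in> {1..m+1}" "n = d k" using coeff_comb_notin by blast
    moreover have "k \<noteq> j" using n \<open>c j = 0\<close> coeff_comb[OF \<open>k \<in> {1..m+1}\<close>] \<open>n = d k\<close> by auto
    ultimately show "n \<in> d ` ({1..m+1} - {j})" by blast
  qed
  hence "card {n. coeff (comb c) n \<noteq> 0} \<le> card (d ` ({1..m+1} - {j}))"
    by (rule card_mono[rotated]) simp
  also have "\<dots> \<le> m"
    using card_image_le[of "{1..m+1} - {j}" d] j by simp
  finally have "card {n. coeff (comb c) n \<noteq> 0} \<le> m" .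
  moreover have "card (a ` {1..m}) < card {n. coeff (comb c) n \<noteq> 0}"
    by (rule card_pos_roots_less_card_nonzero_coeffs[OF c(2)])
      (use a_pos comb_vanishes_at_nodes[OF c(1)] in auto)
  ultimately show False using card_nodes by simp
qed

lemma vanishes_descartes:
  assumes c: "vanishes c" "c 1 \<noteq> 0"
  shows "{x. 0 < x \<and> poly (comb c) x = 0} = a ` {1..m}"
    and "m \<le> sign_changes (\<lambda>k. c (m + 1 - k)) (m + 1)"
proof -
  define R where "R = {x. 0 < x \<and> poly (comb c) x = 0}"
  have "comb c = sparse_poly (\<lambda>k. d (m + 1 - k)) (\<lambda>k. c (m + 1 - k)) (m + 1)"
    unfolding comb_def sparse_poly_def
    by (rule sum.reindex_bij_witness[of _ "\<lambda>j. m + 1 - j" "\<lambda>k. m + 1 - k"]) auto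
  moreover have "strict_mono_on {..<m+1} (\<lambda>k. d (m + 1 - k))"
    by (rule strict_mono_onI) (auto intro: d_decreasing)
  moreover have "comb c \<noteq> 0" using coeff_comb[of 1 c] c(2) by auto
  ultimately have "card R \<le> sign_changes (\<lambda>k. c (m + 1 - k)) (m + 1)"
    unfolding R_def using descartes_rule_of_signs vanishes_coeff_nonzero[OF c(1)] by simp
  moreover have "sign_changes (\<lambda>k. c (m + 1 - k)) (m + 1) \<le> m"
    using sign_changes_le[of _ "m + 1"] by simp
  moreover have "a ` {1..m} \<subseteq> R"
    unfolding R_def using a_pos comb_vanishes_at_nodes[OF c(1)] by auto
  moreover have "finite R" unfolding R_def
    using poly_roots_finite \<open>comb c \<noteq> 0\<close> by (auto intro: rev_finite_subset)
  ultimately show "R = a ` {1..m}" "m \<le> sign_changes (\<lambda>k. c (m + 1 - k)) (m + 1)"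
    using card_nodes card_mono[of R "a ` {1..m}"] card_subset_eq[of R "a ` {1..m}"] by auto
qed

lemma vanishes_coeff_signs:
  assumes c: "vanishes c" "0 < c 1" and j: "j \<in> {1..m+1}"
  shows "odd j \<Longrightarrow> 0 < c j" and "even j \<Longrightarrow> c j < 0"
proof -
  have "m \<le> sign_changes (\<lambda>k. c (m + 1 - k)) (Suc m)"
    using vanishes_descartes(2)[OF c(1)] c(2) by simp
  hence alternate: "c j * c (Suc j) < 0" if "1 \<le> j" "j \<le> m" for j
    using sign_changes_maximal[of m "\<lambda>k. c (m + 1 - k)" "m - j"] that
    by (simp add: Suc_diff_Suc mult.commute)
  have "(odd j \<longrightarrow> 0 < c j) \<and> (even j \<longrightarrow> c j < 0)" if "1 \<le> j" "j \<le> m + 1" for j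
    using that
  proof (induction j rule: dec_induct)
    case base
    thus ?case using c(2) by simp
  next
    case (step j)
    thus ?case using alternate[of j] by (auto simp: mult_less_0_iff)
  qed
  thus "odd j \<Longrightarrow> 0 < c j" "even j \<Longrightarrow> c j < 0" using j by auto
qed

lemma vanishes_comb_pos_beyond_nodes:
  assumes c: "vanishes c" "0 < c 1" and x: "a m < x"
  shows "0 < poly (comb c) x"
proof (rule ccontr)
  have no_root: "poly (comb c) y \<noteq> 0" if y: "a m < y" for y
  proof
    assume "poly (comb c) y = 0"
    moreover have "0 < y" using y a_pos[of m] m_pos by simp
    ultimately have "y \<in> a ` {1..m}" using vanishes_descartes(1)[OF c(1)] c(2) by auto
    thus False using a_le_a_m y by fastforce
  qed
  have "degree (comb c) = d 1"
  proof (rule antisym)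
    show "degree (comb c) \<le> d 1"
    proof (rule degree_le, intro allI impI)
      fix n assume "d 1 < n"
      hence "n \<notin> d ` {1..m+1}" using d_le_d_1 by fastforce
      thus "coeff (comb c) n = 0" by (rule coeff_comb_notin)
    qed
    show "d 1 \<le> degree (comb c)" using coeff_comb[of 1 c] c(2) by (auto intro: le_degree)
  qed
  hence "lead_coeff (comb c) = c 1" using coeff_comb[of 1 c] by simp
  then obtain N where N: "\<And>y. N \<le> y \<Longrightarrow> c 1 \<le> poly (comb c) y"
    using poly_pinfty_gt_lc[of "comb c"] c(2) by auto
  define y where "y = max N (x + 1)"
  assume "\<not> 0 < poly (comb c) x"
  hence "poly (comb c) x < 0" using no_root[OF x] by simp
  moreover have "0 < poly (comb c) y" using N[of y] c(2) unfolding y_def by simp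
  moreover have "x < y" unfolding y_def by simp
  ultimately obtain r where "x < r" "poly (comb c) r = 0"
    using poly_IVT_pos by blast
  thus False using no_root x by simp
qed

lemma exists_vanishes: "\<exists>c. vanishes c \<and> 0 < c 1"
proof -
  obtain h where h: "h \<noteq> 0" "{n. coeff h n \<noteq> 0} \<subseteq> d ` {1..m+1}" "\<forall>x\<in>a ` {1..m}. poly h x = 0"
    using exists_poly_vanishing_on[of "a ` {1..m}" "d ` {1..m+1}"] card_nodes
      card_image[OF inj_on_d] a_pos by fastforce
  define c where "c j = coeff h (d j) / coeff h (d 1)" for j
  have h_eq: "h = comb (\<lambda>j. coeff h (d j))"
    unfolding comb_def by (rule poly_eq_sum_monom_coeff[OF _ inj_on_d]) (use h(2) in auto)
  have "vanishes (\<lambda>j. coeff h (d j))"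
    unfolding vanishes_def using h(3) h_eq poly_comb by (metis image_eqI)
  hence "coeff h (d 1) \<noteq> 0"
    using vanishes_coeff_nonzero[of "\<lambda>j. coeff h (d j)" 1] h(1) h_eq by auto
  moreover from \<open>vanishes (\<lambda>j. coeff h (d j))\<close> have "vanishes c"
    unfolding vanishes_def c_def by (simp add: sum_divide_distrib[symmetric])
  ultimately show ?thesis unfolding c_def by auto
qed

end

section \<open>Runs of a support and the value of \<open>dd\<close>\<close>

definition runs_of :: "nat set \<Rightarrow> nat set set" where
  "runs_of F = {{a..b} | a b. a \<le> b \<and> {a..b} \<subseteq> F \<and> (0 < a \<longrightarrow> a - 1 \<notin> F) \<and> b + 1 \<notin> F}"

lemma ssupp_of_supp[simp]: "ssupp (of_supp A) = A"
  unfolding ssupp_def of_supp_def by auto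

lemma runs_eq_runs_of: "runs s = runs_of (ssupp s)"
  unfolding runs_def runs_of_def ..

lemma runs_ofE:
  assumes "X \<in> runs_of F"
  obtains a b where "X = {a..b}" "a \<le> b" "{a..b} \<subseteq> F" "0 < a \<longrightarrow> a - 1 \<notin> F" "b + 1 \<notin> F"
  using assms unfolding runs_of_def by blast

lemma runs_ofI:
  "a \<le> b \<Longrightarrow> {a..b} \<subseteq> F \<Longrightarrow> (0 < a \<Longrightarrow> a - 1 \<notin> F) \<Longrightarrow> b + 1 \<notin> F \<Longrightarrow> {a..b} \<in> runs_of F"
  unfolding runs_of_def by blast

lemma Max_atLeastAtMost_nat[simp]: "(a::nat) \<le> b \<Longrightarrow> Max {a..b} = b"
  by (rule Max_eqI) auto

lemma Min_atLeastAtMost_nat[simp]: "(a::nat) \<le> b \<Longrightarrow> Min {a..b} = a"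
  by (rule Min_eqI) auto

lemma runs_of_subset: "X \<in> runs_of F \<Longrightarrow> X \<subseteq> F"
  by (erule runs_ofE) auto

lemma finite_runs_of: "finite F \<Longrightarrow> finite (runs_of F)"
  by (rule finite_subset[of _ "Pow F"]) (auto dest: runs_of_subset)

lemma runs_of_overlap_eq:
  assumes X: "X \<in> runs_of F" and Y: "Y \<in> runs_of F" and ne: "X \<inter> Y \<noteq> {}"
  shows "X = Y"
proof -
  obtain a b where ab: "X = {a..b}" "a \<le> b" "{a..b} \<subseteq> F" "0 < a \<longrightarrow> a - 1 \<notin> F" "b + 1 \<notin> F"
    using X by (rule runs_ofE)
  obtain c d where cd: "Y = {c..d}" "c \<le> d" "{c..d} \<subseteq> F" "0 < c \<longrightarrow> c - 1 \<notin> F" "d + 1 \<notin> F"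
    using Y by (rule runs_ofE)
  have overlap: "c \<le> b" "a \<le> d" using ne ab cd by auto
  have "a = c"
  proof (rule ccontr)
    assume "a \<noteq> c"
    hence "c - 1 \<in> {a..b} \<and> 0 < c \<or> a - 1 \<in> {c..d} \<and> 0 < a" using overlap by auto
    thus False using ab cd by auto
  qed
  moreover have "b = d"
  proof (rule ccontr)
    assume "b \<noteq> d"
    hence "b + 1 \<in> {c..d} \<or> d + 1 \<in> {a..b}" using overlap \<open>a = c\<close> ab(2) cd(2) by auto
    thus False using ab cd by auto
  qed
  ultimately show ?thesis using ab cd by simp
qed

lemma runs_of_cover:
  assumes fin: "finite F" and x: "x \<in> F"
  shows "\<exists>X\<in>runs_of F. x \<in> X"
proof -
  have "Max F + 1 \<notin> F" using Max_ge[OF fin, of "Max F + 1"] by linarith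
  hence ex_b: "\<exists>b. x \<le> b \<and> b + 1 \<notin> F" using Max_ge[OF fin x] by blast
  define b where "b = (LEAST b. x \<le> b \<and> b + 1 \<notin> F)"
  have b: "x \<le> b" "b + 1 \<notin> F" unfolding b_def using LeastI_ex[OF ex_b] by auto
  have step: "y + 1 \<in> F" if "x \<le> y" "y < b" for y
    using not_less_Least[of y "\<lambda>b. x \<le> b \<and> b + 1 \<notin> F"] that unfolding b_def by blast
  have up: "{x..b} \<subseteq> F"
  proof
    fix y assume y: "y \<in> {x..b}"
    show "y \<in> F"
    proof (cases "y = x")
      case False
      thus ?thesis using step[of "y - 1"] y x by auto
    qed (use x in simp)
  qed
  have ex_a: "\<exists>a. {a..x} \<subseteq> F" using x by (intro exI[of _ x]) auto
  define a where "a = (LEAST a. {a..x} \<subseteq> F)"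
  have a: "{a..x} \<subseteq> F" "a \<le> x"
    unfolding a_def using LeastI_ex[OF ex_a] Least_le[of "\<lambda>a. {a..x} \<subseteq> F" x] x by auto
  have "a - 1 \<notin> F" if "0 < a"
  proof
    assume "a - 1 \<in> F"
    moreover have "{a - 1..x} = insert (a - 1) {a..x}" using that a(2) by auto
    ultimately have "{a - 1..x} \<subseteq> F" using a(1) by simp
    hence "a \<le> a - 1" unfolding a_def by (rule Least_le)
    thus False using that by simp
  qed
  moreover have "{a..b} = {a..x} \<union> {x..b}" using a(2) b(1) by auto
  hence "{a..b} \<subseteq> F" using a(1) up by simp
  ultimately have "{a..b} \<in> runs_of F" using a(2) b by (intro runs_ofI) auto
  moreover have "x \<in> {a..b}" using a(2) b(1) by simp
  ultimately show ?thesis by blast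
qed

lemma Union_runs_of: "finite F \<Longrightarrow> \<Union>(runs_of F) = F"
  using runs_of_cover runs_of_subset by blast

lemma card_eq_sum_runs_of:
  assumes fin: "finite F" and sub: "A \<subseteq> F"
  shows "card A = (\<Sum>X\<in>runs_of F. card (A \<inter> X))"
proof -
  have "A = (\<Union>X\<in>runs_of F. A \<inter> X)" using Union_runs_of[OF fin] sub by blast
  hence "card A = card (\<Union>X\<in>runs_of F. A \<inter> X)" by simp
  also have "\<dots> = (\<Sum>X\<in>runs_of F. card (A \<inter> X))"
  proof (rule card_UN_disjoint)
    show "finite (runs_of F)" using finite_runs_of[OF fin] .
    show "\<forall>X\<in>runs_of F. finite (A \<inter> X)" using fin sub by (auto intro: finite_subset)
    show "\<forall>X\<in>runs_of F. \<forall>Y\<in>runs_of F. X \<noteq> Y \<longrightarrow> A \<inter> X \<inter> (A \<inter> Y) = {}"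
      using runs_of_overlap_eq by blast
  qed
  finally show ?thesis .
qed

lemma runs_of_gap:
  assumes X: "X \<in> runs_of F" and Y: "Y \<in> runs_of F" and ne: "X \<noteq> Y"
  shows "Max X + 1 < Min Y \<or> Max Y + 1 < Min X"
proof -
  obtain a b where ab: "X = {a..b}" "a \<le> b" "{a..b} \<subseteq> F" "0 < a \<longrightarrow> a - 1 \<notin> F" "b + 1 \<notin> F"
    using X by (rule runs_ofE)
  obtain c d where cd: "Y = {c..d}" "c \<le> d" "{c..d} \<subseteq> F" "0 < c \<longrightarrow> c - 1 \<notin> F" "d + 1 \<notin> F"
    using Y by (rule runs_ofE)
  have disj: "X \<inter> Y = {}" using runs_of_overlap_eq X Y ne by blast
  have "c \<in> F" "a \<in> F" using ab cd by auto
  have "b + 1 < c \<or> d + 1 < a"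
  proof (cases "b < c")
    case True
    moreover have "b + 1 \<noteq> c" using \<open>c \<in> F\<close> ab by auto
    ultimately show ?thesis by linarith
  next
    case False
    hence "c < a" using disj ab cd by (metis atLeastAtMost_iff disjoint_iff not_le order_refl)
    have "d < a"
    proof (rule ccontr)
      assume "\<not> d < a"
      hence "a \<in> X \<inter> Y" using ab cd \<open>c < a\<close> by auto
      thus False using disj by auto
    qed
    moreover have "d + 1 \<noteq> a" using \<open>a \<in> F\<close> cd by auto
    ultimately show ?thesis by linarith
  qed
  thus ?thesis using ab cd by simp
qed

definition run_weight :: "nat set \<Rightarrow> nat" where
  "run_weight X = (if 0 \<in> X then card X else if odd (card X) then card X + 1 else card X)"

definition ceil_set :: "nat set \<Rightarrow> nat set" where
  "ceil_set F = \<Union>(ceilI ` runs_of F)"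

definition floor_set :: "nat set \<Rightarrow> nat set" where
  "floor_set F = \<Union>(floorI ` runs_of F)"

definition weight :: "nat set \<Rightarrow> nat" where
  "weight F = (\<Sum>X\<in>runs_of F. run_weight X)"

lemma ceilI_interval: "a \<le> b \<Longrightarrow> ceilI {a..b} = {a..(if 0 < a \<and> odd (b + 1 - a) then b + 1 else b)}"
  unfolding ceilI_def by (auto simp: atLeastAtMostSuc_conv)

lemma floorI_interval:
  assumes "a \<le> b"
  shows "floorI {a..b} = {(if 0 < a \<and> odd (b + 1 - a) then a - 1 else a)..b}"
proof (cases "0 < a \<and> odd (b + 1 - a)")
  case True
  hence "insert (a - 1) {a..b} = {a - 1..b}" using assms by (auto simp: atLeastAtMost_iff)
  thus ?thesis unfolding floorI_def using True assms by auto
qed (use assms in \<open>auto simp: floorI_def\<close>)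

lemma run_weight_interval:
  "a \<le> b \<Longrightarrow> run_weight {a..b} = (if 0 < a \<and> odd (b + 1 - a) then b + 2 - a else b + 1 - a)"
  unfolding run_weight_def by auto

lemma card_ceilI_interval: "a \<le> b \<Longrightarrow> card (ceilI {a..b}) = run_weight {a..b}"
  by (simp add: ceilI_interval run_weight_interval)

lemma card_floorI_interval: "a \<le> b \<Longrightarrow> card (floorI {a..b}) = run_weight {a..b}"
  by (auto simp: floorI_interval run_weight_interval)

lemma interval_subset_ceilI: "a \<le> b \<Longrightarrow> {a..b} \<subseteq> ceilI {a..b}"
  by (auto simp: ceilI_interval)

lemma interval_subset_floorI: "a \<le> b \<Longrightarrow> {a..b} \<subseteq> floorI {a..b}"
  by (auto simp: floorI_interval)

lemma ceilI_interval_subset: "a \<le> b \<Longrightarrow> ceilI {a..b} \<subseteq> {a..b+1}"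
  by (auto simp: ceilI_interval)

lemma floorI_interval_subset: "a \<le> b \<Longrightarrow> floorI {a..b} \<subseteq> {a-1..b}"
  by (auto simp: floorI_interval)

lemma subset_ceil_set: "finite F \<Longrightarrow> F \<subseteq> ceil_set F"
proof
  fix x assume "finite F" "x \<in> F"
  then obtain X where X: "X \<in> runs_of F" "x \<in> X" using runs_of_cover by blast
  then obtain a b where "X = {a..b}" "a \<le> b" by (auto elim: runs_ofE)
  thus "x \<in> ceil_set F" unfolding ceil_set_def using X interval_subset_ceilI by blast
qed

lemma subset_floor_set: "finite F \<Longrightarrow> F \<subseteq> floor_set F"
proof
  fix x assume "finite F" "x \<in> F"
  then obtain X where X: "X \<in> runs_of F" "x \<in> X" using runs_of_cover by blast
  then obtain a b where "X = {a..b}" "a \<le> b" by (auto elim: runs_ofE)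
  thus "x \<in> floor_set F" unfolding floor_set_def using X interval_subset_floorI by blast
qed

lemma finite_ceilI: "finite X \<Longrightarrow> finite (ceilI X)"
  unfolding ceilI_def by simp

lemma finite_floorI: "finite X \<Longrightarrow> finite (floorI X)"
  unfolding floorI_def by simp

lemma ceilI_runs_of_disjoint:
  assumes "X \<in> runs_of F" "Y \<in> runs_of F" "X \<noteq> Y"
  shows "ceilI X \<inter> ceilI Y = {}"
proof -
  obtain a b where ab: "X = {a..b}" "a \<le> b" using assms(1) by (auto elim: runs_ofE)
  obtain c d where cd: "Y = {c..d}" "c \<le> d" using assms(2) by (auto elim: runs_ofE)
  have "b + 1 < c \<or> d + 1 < a" using runs_of_gap[OF assms] ab cd by simp
  hence "{a..b+1} \<inter> {c..d+1} = {}" by auto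
  thus ?thesis using ceilI_interval_subset[OF ab(2)] ceilI_interval_subset[OF cd(2)] ab cd by blast
qed

lemma floorI_runs_of_disjoint:
  assumes "X \<in> runs_of F" "Y \<in> runs_of F" "X \<noteq> Y"
  shows "floorI X \<inter> floorI Y = {}"
proof -
  obtain a b where ab: "X = {a..b}" "a \<le> b" using assms(1) by (auto elim: runs_ofE)
  obtain c d where cd: "Y = {c..d}" "c \<le> d" using assms(2) by (auto elim: runs_ofE)
  have "b + 1 < c \<or> d + 1 < a" using runs_of_gap[OF assms] ab cd by simp
  hence "{a-1..b} \<inter> {c-1..d} = {}" by auto
  thus ?thesis using floorI_interval_subset[OF ab(2)] floorI_interval_subset[OF cd(2)] ab cd by blast
qed

lemma finite_runs_of_member: "X \<in> runs_of F \<Longrightarrow> finite X"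
  by (auto elim: runs_ofE)

lemma card_ceil_set: "finite F \<Longrightarrow> card (ceil_set F) = weight F"
  unfolding ceil_set_def weight_def
  by (subst card_UN_disjoint)
    (auto simp: finite_runs_of finite_runs_of_member finite_ceilI ceilI_runs_of_disjoint
      card_ceilI_interval elim!: runs_ofE intro!: sum.cong)

lemma card_floor_set: "finite F \<Longrightarrow> card (floor_set F) = weight F"
  unfolding floor_set_def weight_def
  by (subst card_UN_disjoint)
    (auto simp: finite_runs_of finite_runs_of_member finite_floorI floorI_runs_of_disjoint
      card_floorI_interval elim!: runs_ofE intro!: sum.cong)

lemma finite_ceil_set: "finite F \<Longrightarrow> finite (ceil_set F)"
  unfolding ceil_set_def by (auto simp: finite_runs_of finite_runs_of_member finite_ceilI)

lemma sceil_eq_ceil_set: "sceil s = of_supp (ceil_set (ssupp s))"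
  unfolding sceil_def ceil_set_def runs_eq_runs_of ..

lemma sfloor_eq_floor_set: "sfloor s = of_supp (floor_set (ssupp s))"
  unfolding sfloor_def floor_set_def runs_eq_runs_of ..

lemma card_le_if_no_consecutive:
  assumes sub: "A \<subseteq> {a..b}" and nc: "\<forall>x\<in>A. Suc x \<notin> A"
  shows "card A \<le> (b + 2 - a) div 2"
proof -
  define g where "g x = (x - a) div 2" for x
  have inj: "inj_on g A"
  proof (rule inj_onI)
    fix x y assume xy: "x \<in> A" "y \<in> A" "g x = g y"
    show "x = y"
    proof (rule ccontr)
      assume "x \<noteq> y"
      then consider "x < y" | "y < x" by linarith
      thus False
      proof cases
        case 1
        have "y \<noteq> Suc x" using nc xy by auto
        hence "x + 2 \<le> y" using 1 by linarith
        moreover have "a \<le> x" using sub xy by auto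
        ultimately have "g x < g y" unfolding g_def by linarith
        thus False using xy by simp
      next
        case 2
        have "x \<noteq> Suc y" using nc xy by auto
        hence "y + 2 \<le> x" using 2 by linarith
        moreover have "a \<le> y" using sub xy by auto
        ultimately have "g y < g x" unfolding g_def by linarith
        thus False using xy by simp
      qed
    qed
  qed
  have img: "g ` A \<subseteq> {..< (b + 2 - a) div 2}"
  proof
    fix z assume "z \<in> g ` A"
    then obtain x where x: "x \<in> A" "z = g x" by auto
    hence "a \<le> x" "x \<le> b" using sub by auto
    thus "z \<in> {..< (b + 2 - a) div 2}" unfolding x(2) g_def by auto
  qed
  have "card A = card (g ` A)" using card_image[OF inj] by simp
  also have "\<dots> \<le> card {..< (b + 2 - a) div 2}" by (rule card_mono[OF _ img]) simp
  finally show ?thesis by simp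
qed

definition sign_change_pairs :: "(nat \<Rightarrow> sgnsym) \<Rightarrow> (nat \<times> nat) set" where
  "sign_change_pairs t = {(i, j). i < j \<and> {t i, t j} = {Neg, Pos} \<and> (\<forall>k. i < k \<and> k < j \<longrightarrow> t k = Zer)}"

lemma SC_eq_card_sign_change_pairs: "SC t = card (sign_change_pairs t)"
  unfolding SC_def sign_change_pairs_def ..

lemma doubleton_eq_Neg_Pos: "{x, y} = {Neg, Pos} \<longleftrightarrow> (x = Neg \<and> y = Pos) \<or> (x = Pos \<and> y = Neg)"
  by (cases x; cases y) (auto simp: doubleton_eq_iff)

lemma sign_change_pairs_fst_eq:
  assumes "(i, j) \<in> sign_change_pairs t" "(i', j) \<in> sign_change_pairs t"
  shows "i = i'"
proof (rule ccontr)
  assume "i \<noteq> i'"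
  moreover have "t i \<noteq> Zer" "t i' \<noteq> Zer"
    using assms unfolding sign_change_pairs_def doubleton_eq_Neg_Pos by auto
  ultimately show False using assms unfolding sign_change_pairs_def by (auto simp: neq_iff)
qed

lemma sign_change_pairs_snd_eq:
  assumes "(i, j) \<in> sign_change_pairs t" "(i, j') \<in> sign_change_pairs t"
  shows "j = j'"
proof (rule ccontr)
  assume "j \<noteq> j'"
  moreover have "t j \<noteq> Zer" "t j' \<noteq> Zer"
    using assms unfolding sign_change_pairs_def doubleton_eq_Neg_Pos by auto
  ultimately show False using assms unfolding sign_change_pairs_def by (auto simp: neq_iff)
qed

definition left_ends :: "nat set \<Rightarrow> nat set" where
  "left_ends Q = {j\<in>Q. 0 < j \<and> j - 1 \<notin> Q}"

definition right_ends :: "nat set \<Rightarrow> nat set" where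
  "right_ends Q = {i\<in>Q. Suc i \<notin> Q}"

lemma card_sign_change_pairs_le:
  assumes fin: "finite {i. t i = Pos}"
  shows "card (sign_change_pairs t) \<le> card (left_ends {i. t i = Pos}) + card (right_ends {i. t i = Pos})"
proof -
  define P1 where "P1 = {p\<in>sign_change_pairs t. t (snd p) = Pos}"
  define P2 where "P2 = {p\<in>sign_change_pairs t. t (fst p) = Pos}"
  have inj1: "inj_on snd P1"
  proof (rule inj_onI)
    fix p q assume "p \<in> P1" "q \<in> P1" "snd p = snd q"
    moreover obtain i j i' j' where "p = (i, j)" "q = (i', j')" by fastforce
    ultimately show "p = q" unfolding P1_def using sign_change_pairs_fst_eq[of i j t i'] by simp
  qed
  have sub1: "snd ` P1 \<subseteq> left_ends {i. t i = Pos}"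
  proof
    fix j assume "j \<in> snd ` P1"
    then obtain i where "(i, j) \<in> sign_change_pairs t" "t j = Pos" unfolding P1_def by force
    hence "i < j" "t i = Neg" "\<forall>k. i < k \<and> k < j \<longrightarrow> t k = Zer"
      unfolding sign_change_pairs_def doubleton_eq_Neg_Pos by auto
    hence "t (j - 1) \<noteq> Pos" by (cases "j - 1 = i") auto
    thus "j \<in> left_ends {i. t i = Pos}" unfolding left_ends_def using \<open>i < j\<close> \<open>t j = Pos\<close> by auto
  qed
  have fin1: "finite (left_ends {i. t i = Pos})" using fin unfolding left_ends_def by simp
  have c1: "card P1 \<le> card (left_ends {i. t i = Pos})" "finite P1"
    using card_inj_on_le[OF inj1 sub1 fin1] finite_imageD[OF finite_subset[OF sub1 fin1] inj1] by auto
  have inj2: "inj_on fst P2"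
  proof (rule inj_onI)
    fix p q assume "p \<in> P2" "q \<in> P2" "fst p = fst q"
    moreover obtain i j i' j' where "p = (i, j)" "q = (i', j')" by fastforce
    ultimately show "p = q" unfolding P2_def using sign_change_pairs_snd_eq[of i j t j'] by simp
  qed
  have sub2: "fst ` P2 \<subseteq> right_ends {i. t i = Pos}"
  proof
    fix i assume "i \<in> fst ` P2"
    then obtain j where "(i, j) \<in> sign_change_pairs t" "t i = Pos" unfolding P2_def by force
    hence "i < j" "t j = Neg" "\<forall>k. i < k \<and> k < j \<longrightarrow> t k = Zer"
      unfolding sign_change_pairs_def doubleton_eq_Neg_Pos by auto
    hence "t (Suc i) \<noteq> Pos" by (cases "Suc i = j") auto
    thus "i \<in> right_ends {i. t i = Pos}" unfolding right_ends_def using \<open>t i = Pos\<close> by auto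
  qed
  have fin2: "finite (right_ends {i. t i = Pos})" using fin unfolding right_ends_def by simp
  have c2: "card P2 \<le> card (right_ends {i. t i = Pos})" "finite P2"
    using card_inj_on_le[OF inj2 sub2 fin2] finite_imageD[OF finite_subset[OF sub2 fin2] inj2] by auto
  have "sign_change_pairs t \<subseteq> P1 \<union> P2"
    unfolding P1_def P2_def sign_change_pairs_def doubleton_eq_Neg_Pos by auto
  hence "card (sign_change_pairs t) \<le> card (P1 \<union> P2)" using c1(2) c2(2) by (simp add: card_mono)
  also have "\<dots> \<le> card P1 + card P2" by (rule card_Un_le)
  finally show ?thesis using c1(1) c2(1) by linarith
qed

lemma card_ends_in_run_le:
  assumes X: "X \<in> runs_of F"
  shows "card (left_ends Q \<inter> X) + card (right_ends Q \<inter> X) \<le> run_weight X"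
proof -
  obtain a b where ab: "X = {a..b}" "a \<le> b" using X by (auto elim: runs_ofE)
  have no_consecutive: "\<forall>x\<in>left_ends Q \<inter> X. Suc x \<notin> left_ends Q \<inter> X"
    "\<forall>x\<in>right_ends Q \<inter> X. Suc x \<notin> right_ends Q \<inter> X"
    unfolding left_ends_def right_ends_def by auto
  have right: "card (right_ends Q \<inter> X) \<le> (b + 2 - a) div 2"
    by (rule card_le_if_no_consecutive[OF _ no_consecutive(2)]) (simp add: ab(1))
  show ?thesis
  proof (cases "a = 0")
    case True
    have "left_ends Q \<inter> X \<subseteq> {1..b}" unfolding left_ends_def ab(1) by auto
    hence "card (left_ends Q \<inter> X) \<le> (b + 1) div 2"
      using card_le_if_no_consecutive[OF _ no_consecutive(1)] by fastforce
    moreover have "(b + 1) div 2 + (b + 2) div 2 = b + 1" by presburger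
    ultimately show ?thesis using right True ab by (simp add: run_weight_interval)
  next
    case False
    have "card (left_ends Q \<inter> X) \<le> (b + 2 - a) div 2"
      by (rule card_le_if_no_consecutive[OF _ no_consecutive(1)]) (auto simp: ab(1) left_ends_def)
    moreover have "(b + 2 - a) div 2 + (b + 2 - a) div 2
        \<le> (if odd (b + 1 - a) then b + 2 - a else b + 1 - a)"
      using ab(2) by presburger
    ultimately show ?thesis using right False ab by (simp add: run_weight_interval)
  qed
qed

lemma SC_le_weight:
  assumes fin: "finite F" and pos: "\<And>i. t i = Pos \<Longrightarrow> i \<in> F"
  shows "SC t \<le> weight F"
proof -
  define Q where "Q = {i. t i = Pos}"
  have "Q \<subseteq> F" unfolding Q_def using pos by auto
  hence ends: "left_ends Q \<subseteq> F" "right_ends Q \<subseteq> F" "finite Q"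
    unfolding left_ends_def right_ends_def using fin finite_subset by auto
  have "SC t \<le> card (left_ends Q) + card (right_ends Q)"
    unfolding SC_eq_card_sign_change_pairs Q_def by (rule card_sign_change_pairs_le) (use ends Q_def in simp)
  also have "\<dots> = (\<Sum>X\<in>runs_of F. card (left_ends Q \<inter> X) + card (right_ends Q \<inter> X))"
    using card_eq_sum_runs_of[OF fin ends(1)] card_eq_sum_runs_of[OF fin ends(2)] by (simp add: sum.distrib)
  also have "\<dots> \<le> weight F"
    unfolding weight_def by (rule sum_mono) (rule card_ends_in_run_le)
  finally show ?thesis .
qed

lemma card_even_distance_from_top:
  assumes "(a::nat) \<le> b"
  shows "card {i\<in>{a..b}. even (b - i)} = (b - a) div 2 + 1"
proof -
  have eq: "{i\<in>{a..b}. even (b - i)} = (\<lambda>k. b - 2 * k) ` {..(b - a) div 2}"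
  proof
    show "{i\<in>{a..b}. even (b - i)} \<subseteq> (\<lambda>k. b - 2 * k) ` {..(b - a) div 2}"
    proof
      fix i assume i: "i \<in> {i\<in>{a..b}. even (b - i)}"
      hence "i = b - 2 * ((b - i) div 2)" "(b - i) div 2 \<le> (b - a) div 2" by auto
      thus "i \<in> (\<lambda>k. b - 2 * k) ` {..(b - a) div 2}" by blast
    qed
    show "(\<lambda>k. b - 2 * k) ` {..(b - a) div 2} \<subseteq> {i\<in>{a..b}. even (b - i)}"
    proof
      fix i assume "i \<in> (\<lambda>k. b - 2 * k) ` {..(b - a) div 2}"
      then obtain k where k: "k \<le> (b - a) div 2" "i = b - 2 * k" by auto
      hence "2 * k \<le> b - a" by linarith
      hence "a \<le> i" "i \<le> b" "b - i = 2 * k" using k assms by auto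
      moreover have "even (b - i)" by (simp only: \<open>b - i = 2 * k\<close>) simp
      ultimately show "i \<in> {i\<in>{a..b}. even (b - i)}" unfolding mem_Collect_eq atLeastAtMost_iff by blast
    qed
  qed
  have inj: "inj_on (\<lambda>k. b - 2 * k) {..(b - a) div 2}"
  proof (rule inj_onI)
    fix x y assume "x \<in> {..(b - a) div 2}" "y \<in> {..(b - a) div 2}" "b - 2 * x = b - 2 * y"
    thus "x = y" by auto
  qed
  show ?thesis unfolding eq card_image[OF inj] by simp
qed

lemma SC_ge_isolated_positions:
  assumes fin: "finite P" and isolated: "\<And>i. i \<in> P \<Longrightarrow> Suc i \<notin> P" and bound: "P \<subseteq> {..M}"
  defines "t \<equiv> \<lambda>i. if i \<in> P then Pos else if i \<le> Suc M then Neg else Zer"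
  shows "card P + card (P - {0}) \<le> SC t"
proof -
  define PA where "PA = (\<lambda>i. (i, Suc i)) ` P"
  define PB where "PB = (\<lambda>j. (j - 1, j)) ` (P - {0})"
  have PosI: "i \<in> P \<Longrightarrow> Pos = t i" for i unfolding t_def by simp
  have "t (Suc i) = Neg" if "i \<in> P" for i
    using isolated[OF that] bound that unfolding t_def by auto
  hence PA: "PA \<subseteq> sign_change_pairs t"
    unfolding PA_def sign_change_pairs_def using PosI by auto
  have "t (j - 1) = Neg" if "j \<in> P" "0 < j" for j
    using isolated[of "j - 1"] bound that unfolding t_def by auto
  hence PB: "PB \<subseteq> sign_change_pairs t"
    unfolding PB_def sign_change_pairs_def using PosI by auto
  have "PA \<inter> PB = {}"
  proof -
    have "t (fst p) = Pos" if "p \<in> PA" for p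
      using that PosI unfolding PA_def by auto
    moreover have "t (fst p) = Neg" if p: "p \<in> PB" for p
    proof -
      obtain j where "j \<in> P - {0}" "p = (j - 1, j)" using p unfolding PB_def by blast
      thus ?thesis using \<open>\<And>j. j \<in> P \<Longrightarrow> 0 < j \<Longrightarrow> t (j - 1) = Neg\<close> by simp
    qed
    ultimately show ?thesis by fastforce
  qed
  moreover have "card PA = card P" "card PB = card (P - {0})"
    unfolding PA_def PB_def by (auto intro!: card_image inj_onI)
  moreover have "finite PA" "finite PB" unfolding PA_def PB_def using fin by simp_all
  moreover have "finite (sign_change_pairs t)"
  proof (rule finite_subset)
    have "t i \<noteq> Zer \<Longrightarrow> i \<le> Suc M" for i using bound unfolding t_def by (auto split: if_splits)
    thus "sign_change_pairs t \<subseteq> {..Suc M} \<times> {..Suc M}"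
      unfolding sign_change_pairs_def doubleton_eq_Neg_Pos by fastforce
  qed simp
  ultimately have "card P + card (P - {0}) = card (PA \<union> PB)" "card (PA \<union> PB) \<le> SC t"
    using card_Un_disjoint[of PA PB] PA PB card_mono[of "sign_change_pairs t" "PA \<union> PB"]
    unfolding SC_eq_card_sign_change_pairs by simp_all
  thus ?thesis by simp
qed

definition even_from_top :: "nat set \<Rightarrow> nat set" where
  "even_from_top F = (\<Union>X\<in>runs_of F. {i\<in>X. even (Max X - i)})"

lemma even_from_top_Int_run:
  assumes "X \<in> runs_of F"
  shows "even_from_top F \<inter> X = {i\<in>X. even (Max X - i)}"
  using runs_of_overlap_eq[OF _ assms] assms unfolding even_from_top_def by blast

lemma even_from_top_subset: "even_from_top F \<subseteq> F"
  unfolding even_from_top_def by (auto dest: runs_of_subset)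

lemma even_from_top_isolated:
  assumes "i \<in> even_from_top F"
  shows "Suc i \<notin> even_from_top F"
proof
  assume si: "Suc i \<in> even_from_top F"
  obtain X where X: "X \<in> runs_of F" "i \<in> X" "even (Max X - i)"
    using assms unfolding even_from_top_def by blast
  obtain a b where ab: "X = {a..b}" "a \<le> b" "b + 1 \<notin> F" using X(1) by (auto elim: runs_ofE)
  have "Suc i \<in> F" using si even_from_top_subset by auto
  hence "i < b" using ab X by (metis Suc_eq_plus1 atLeastAtMost_iff le_neq_implies_less)
  hence "Suc i \<in> even_from_top F \<inter> X" using ab X si by auto
  moreover have "Max X = b" using ab by simp
  ultimately have "even (b - Suc i)" "even (b - i)" using even_from_top_Int_run[OF X(1)] X(3) by auto
  thus False using \<open>i < b\<close> by presburger
qed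

lemma card_even_from_top:
  assumes fin: "finite F"
  shows "card (even_from_top F) + card (even_from_top F - {0}) = weight F"
proof -
  let ?P = "even_from_top F"
  have "card ?P + card (?P - {0}) = (\<Sum>X\<in>runs_of F. card (?P \<inter> X) + card ((?P - {0}) \<inter> X))"
    using card_eq_sum_runs_of[OF fin even_from_top_subset] card_eq_sum_runs_of[OF fin, of "?P - {0}"]
      even_from_top_subset by (auto simp: sum.distrib)
  also have "\<dots> = weight F" unfolding weight_def
  proof (rule sum.cong)
    fix X assume X: "X \<in> runs_of F"
    then obtain a b where ab: "X = {a..b}" "a \<le> b" by (auto elim: runs_ofE)
    have top: "card (?P \<inter> X) = (b - a) div 2 + 1"
      unfolding even_from_top_Int_run[OF X] using card_even_distance_from_top[OF ab(2)] ab by simp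
    show "card (?P \<inter> X) + card ((?P - {0}) \<inter> X) = run_weight X"
    proof (cases "a = 0")
      case True
      have "(?P - {0}) \<inter> X = (?P \<inter> X) - {0}" by auto
      moreover have "(0 \<in> ?P \<inter> X) = even b" unfolding even_from_top_Int_run[OF X] using ab True by auto
      ultimately have "card ((?P - {0}) \<inter> X) = (b - a) div 2 + 1 - (if even b then 1 else 0)"
        using top fin by (auto simp: card_Diff_singleton)
      moreover have "run_weight X = b + 1" using ab True by (simp add: run_weight_interval)
      ultimately show ?thesis using top True by simp presburger
    next
      case False
      have "(?P - {0}) \<inter> X = ?P \<inter> X" using ab False by auto
      moreover have "run_weight X = (if odd (b + 1 - a) then b + 2 - a else b + 1 - a)"
        using ab False by (simp add: run_weight_interval)
      moreover have "(b - a) div 2 + 1 + ((b - a) div 2 + 1)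
          = (if odd (b + 1 - a) then b + 2 - a else b + 1 - a)"
        using ab(2) by presburger
      ultimately show ?thesis using top by simp
    qed
  qed simp
  finally show ?thesis .
qed

lemma exists_SC_ge_weight:
  assumes fin: "finite F"
  shows "\<exists>t. t \<in> SS \<and> (\<forall>i. t i = Pos \<longrightarrow> i \<in> F) \<and> weight F \<le> SC t"
proof -
  define P where "P = even_from_top F"
  define M where "M = Max (insert 0 F)"
  have P: "finite P" "P \<subseteq> {..M}" "P \<subseteq> F"
    unfolding P_def M_def using even_from_top_subset fin finite_subset by fastforce+
  define t where "t i = (if i \<in> P then Pos else if i \<le> Suc M then Neg else Zer)" for i
  have "weight F \<le> SC t"
    using SC_ge_isolated_positions[OF P(1) _ P(2)] card_even_from_top[OF fin] even_from_top_isolated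
    unfolding P_def t_def by fastforce
  moreover have "finite {i. t i \<noteq> Zer}"
    by (rule finite_subset[of _ "{..Suc M}"]) (use P(2) in \<open>auto simp: t_def split: if_splits\<close>)
  hence "t \<in> SS" unfolding SS_def ssupp_def by simp
  moreover have "\<forall>i. t i = Pos \<longrightarrow> i \<in> F" unfolding t_def using P(3) by auto
  ultimately show ?thesis by blast
qed

lemma dd_eq_weight:
  assumes s: "s \<in> SSplus"
  shows "dd s = weight (ssupp s)"
proof -
  define F where "F = ssupp s"
  have fin: "finite F" using s unfolding F_def SSplus_def SS_def by auto
  have sv: "\<forall>i. s i \<in> {Zer, Pos}" using s unfolding SSplus_def by auto
  have adm: "(\<forall>i. t i \<in> {Neg, Zer, s i}) \<longleftrightarrow> (\<forall>i. t i = Pos \<longrightarrow> i \<in> F)" for t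
  proof
    assume a: "\<forall>i. t i \<in> {Neg, Zer, s i}"
    show "\<forall>i. t i = Pos \<longrightarrow> i \<in> F"
    proof (intro allI impI)
      fix i assume "t i = Pos"
      hence "s i = Pos" using a by (metis empty_iff insert_iff sgnsym.distinct(3) sgnsym.distinct(5))
      thus "i \<in> F" unfolding F_def ssupp_def by auto
    qed
  next
    assume a: "\<forall>i. t i = Pos \<longrightarrow> i \<in> F"
    show "\<forall>i. t i \<in> {Neg, Zer, s i}"
    proof
      fix i
      show "t i \<in> {Neg, Zer, s i}"
      proof (cases "t i")
        case Pos
        hence "i \<in> F" using a by auto
        hence "s i = Pos" using sv unfolding F_def ssupp_def by auto
        thus ?thesis using Pos by simp
      qed auto
    qed
  qed
  define D where "D = {SC t | t. t \<in> SS \<and> (\<forall>i. t i \<in> {Neg, Zer, s i})}"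
  have Dle: "\<forall>x\<in>D. x \<le> weight F" unfolding D_def using SC_le_weight[OF fin] adm by auto
  have finD: "finite D" by (rule finite_subset[of _ "{..weight F}"]) (use Dle in auto)
  obtain t0 where t0: "t0 \<in> SS" "\<forall>i. t0 i = Pos \<longrightarrow> i \<in> F" "weight F \<le> SC t0"
    using exists_SC_ge_weight[OF fin] by blast
  have "SC t0 \<in> D" unfolding D_def using t0 adm by auto
  hence "SC t0 = weight F" using Dle t0 by force
  hence "Max D = weight F" using \<open>SC t0 \<in> D\<close> Dle finD by (metis Max_eqI)
  thus ?thesis unfolding dd_def D_def[symmetric] F_def .
qed

section \<open>Paired supports\<close>

text \<open>For \<open>k \<in> S\<close>, \<^term>\<open>count_ge S k\<close> is the position of \<open>k\<close> in the decreasing enumeration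
  \<open>d\<^sub>1 > d\<^sub>2 > \<dots>\<close> of \<open>S\<close>.\<close>

definition count_ge :: "nat set \<Rightarrow> nat \<Rightarrow> nat" where
  "count_ge S k = card {x\<in>S. k \<le> x}"

text \<open>Read from the top, a paired set splits into pairs \<open>{k - 1, k}\<close> of neighbours, possibly
  followed by the singleton \<open>{0}\<close>; its runs not containing \<open>0\<close> have even length.\<close>

definition paired :: "nat set \<Rightarrow> bool" where
  "paired S \<longleftrightarrow> (\<forall>k\<in>S. 0 < k \<and> odd (count_ge S k) \<longrightarrow> k - 1 \<in> S)"

lemma count_ge_Suc_mem:
  assumes "finite S" "k \<in> S"
  shows "count_ge S k = Suc (count_ge S (Suc k))"
proof -
  have "{x\<in>S. k \<le> x} = insert k {x\<in>S. Suc k \<le> x}" using assms(2) by auto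
  thus ?thesis unfolding count_ge_def using assms(1) by simp
qed

lemma count_ge_Suc_not_mem:
  assumes "k \<notin> S"
  shows "count_ge S k = count_ge S (Suc k)"
proof -
  have "{x\<in>S. k \<le> x} = {x\<in>S. Suc k \<le> x}" using assms by (auto simp: Suc_le_eq le_less)
  thus ?thesis unfolding count_ge_def by simp
qed

lemma count_ge_interval:
  assumes fin: "finite S" and ab: "a \<le> b" and sub: "{a..b} \<subseteq> S"
  shows "count_ge S a = count_ge S b + (b - a)"
proof -
  have eq: "{x\<in>S. a \<le> x} = {a..<b} \<union> {x\<in>S. b \<le> x}" using sub ab by auto
  have "card ({a..<b} \<union> {x\<in>S. b \<le> x}) = card {a..<b} + card {x\<in>S. b \<le> x}"
    by (rule card_Un_disjoint) (use fin in auto)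
  thus ?thesis unfolding count_ge_def eq by simp
qed

lemma odd_count_ge_run_top:
  assumes fin: "finite S" and pr: "paired S" and b: "b \<in> S" and sb: "Suc b \<notin> S"
  shows "odd (count_ge S b)"
proof (cases "{x\<in>S. b < x} = {}")
  case True
  hence "{x\<in>S. b \<le> x} = {b}" using b by (auto simp: le_less)
  thus ?thesis unfolding count_ge_def by simp
next
  case False
  define k where "k = Min {x\<in>S. b < x}"
  have fk: "finite {x\<in>S. b < x}" using fin by auto
  have k: "k \<in> S" "b < k" using Min_in[OF fk False] unfolding k_def by auto
  have kmin: "\<And>y. y \<in> S \<Longrightarrow> b < y \<Longrightarrow> k \<le> y" unfolding k_def using Min_le[OF fk] by auto
  have "k \<noteq> Suc b" using k sb by auto
  hence kb: "Suc b < k" using k by linarith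
  have "k - 1 \<notin> S"
  proof
    assume "k - 1 \<in> S"
    hence "k \<le> k - 1" using kmin kb by auto
    thus False using kb by simp
  qed
  hence "even (count_ge S k)" using pr k kb unfolding paired_def by auto
  moreover have "{x\<in>S. b \<le> x} = insert b {x\<in>S. k \<le> x}"
    using b k kmin by (auto simp: le_less)
  moreover have "b \<notin> {x\<in>S. k \<le> x}" using k by auto
  ultimately show ?thesis unfolding count_ge_def using fin by simp
qed

lemma paired_even_card_run:
  assumes fin: "finite S" and pr: "paired S" and X: "X \<in> runs_of S" and nz: "0 \<notin> X"
  shows "even (card X)"
proof -
  obtain a b where ab: "X = {a..b}" "a \<le> b" "{a..b} \<subseteq> S" "0 < a \<longrightarrow> a - 1 \<notin> S" "b + 1 \<notin> S"
    using X by (rule runs_ofE)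
  have a0: "0 < a" using nz ab by (cases a) auto
  have "a \<in> S" using ab by auto
  hence ea: "even (count_ge S a)" using pr ab a0 unfolding paired_def by auto
  have ob: "odd (count_ge S b)" using odd_count_ge_run_top[OF fin pr] ab by auto
  have "count_ge S a = count_ge S b + (b - a)" using count_ge_interval[OF fin ab(2,3)] .
  hence "odd (b - a)" using ea ob by auto
  thus ?thesis using ab by auto
qed

lemma paired_run_weight: "finite S \<Longrightarrow> paired S \<Longrightarrow> X \<in> runs_of S \<Longrightarrow> run_weight X = card X"
  unfolding run_weight_def using paired_even_card_run by auto

lemma paired_ceilI: "finite S \<Longrightarrow> paired S \<Longrightarrow> X \<in> runs_of S \<Longrightarrow> ceilI X = X"
  unfolding ceilI_def using paired_even_card_run by auto

lemma paired_floorI: "finite S \<Longrightarrow> paired S \<Longrightarrow> X \<in> runs_of S \<Longrightarrow> floorI X = X"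
  unfolding floorI_def using paired_even_card_run by auto

lemma paired_ceil_set_eq: "finite S \<Longrightarrow> paired S \<Longrightarrow> ceil_set S = S"
  unfolding ceil_set_def using paired_ceilI Union_runs_of by (metis (no_types, lifting) SUP_cong image_ident)

lemma paired_weight_eq: assumes "finite S" "paired S" shows "weight S = card S"
proof -
  have "card S = (\<Sum>X\<in>runs_of S. card (S \<inter> X))" using card_eq_sum_runs_of[OF assms(1)] by simp
  also have "\<dots> = (\<Sum>X\<in>runs_of S. run_weight X)"
    by (rule sum.cong) (use paired_run_weight[OF assms] runs_of_subset in \<open>auto simp: Int_absorb1\<close>)
  finally show ?thesis unfolding weight_def by simp
qed

lemma even_count_ge_ceil_set:
  assumes fin: "finite F"
    and cond: "\<forall>X\<in>runs_of F. (k \<le> Min X \<and> 0 < Min X) \<or> (\<forall>y\<in>ceilI X. y < k)"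
  shows "even (count_ge (ceil_set F) k)"
proof -
  define R where "R = {X\<in>runs_of F. k \<le> Min X \<and> 0 < Min X}"
  have eq: "{x\<in>ceil_set F. k \<le> x} = \<Union>(ceilI ` R)"
  proof
    show "{x\<in>ceil_set F. k \<le> x} \<subseteq> \<Union>(ceilI ` R)"
    proof
      fix x assume x: "x \<in> {x\<in>ceil_set F. k \<le> x}"
      then obtain X where X: "X \<in> runs_of F" "x \<in> ceilI X" unfolding ceil_set_def by auto
      have "X \<in> R" using cond X x unfolding R_def by fastforce
      thus "x \<in> \<Union>(ceilI ` R)" using X by auto
    qed
    show "\<Union>(ceilI ` R) \<subseteq> {x\<in>ceil_set F. k \<le> x}"
    proof
      fix x assume "x \<in> \<Union>(ceilI ` R)"
      then obtain X where X: "X \<in> R" "x \<in> ceilI X" by auto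
      obtain a b where ab: "X = {a..b}" "a \<le> b" using X(1) unfolding R_def by (auto elim: runs_ofE)
      have "a \<le> x" using X(2) ceilI_interval_subset[OF ab(2)] ab by auto
      moreover have "k \<le> a" using X(1) ab unfolding R_def by auto
      ultimately show "x \<in> {x\<in>ceil_set F. k \<le> x}" using X unfolding ceil_set_def R_def by auto
    qed
  qed
  have finR: "finite R" unfolding R_def using finite_runs_of[OF fin] by auto
  have "card (\<Union>(ceilI ` R)) = (\<Sum>X\<in>R. card (ceilI X))"
  proof (rule card_UN_disjoint[OF finR])
    show "\<forall>X\<in>R. finite (ceilI X)"
    proof
      fix X assume "X \<in> R"
      then obtain a b where ab: "X = {a..b}" "a \<le> b" unfolding R_def by (auto elim: runs_ofE)
      show "finite (ceilI X)" unfolding ab(1) by (rule finite_subset[OF ceilI_interval_subset[OF ab(2)]]) simp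
    qed
    show "\<forall>X\<in>R. \<forall>Y\<in>R. X \<noteq> Y \<longrightarrow> ceilI X \<inter> ceilI Y = {}"
      using ceilI_runs_of_disjoint unfolding R_def by auto
  qed
  moreover have "even (\<Sum>X\<in>R. card (ceilI X))"
  proof (rule dvd_sum)
    fix X assume "X \<in> R"
    then obtain a b where ab: "X = {a..b}" "a \<le> b" "0 < a" unfolding R_def by (auto elim: runs_ofE)
    have "card (ceilI X) = run_weight X" using card_ceilI_interval ab by simp
    thus "even (card (ceilI X))" using ab by (simp add: run_weight_interval)
  qed
  ultimately show ?thesis unfolding count_ge_def eq by simp
qed

lemma even_count_ge_not_in_ceil_set:
  assumes fin: "finite F" and k: "k \<notin> ceil_set F"
  shows "even (count_ge (ceil_set F) k)"
proof (rule even_count_ge_ceil_set[OF fin], rule ballI)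
  fix X assume X: "X \<in> runs_of F"
  obtain a b where ab: "X = {a..b}" "a \<le> b" using X by (auto elim: runs_ofE)
  obtain b' where b': "ceilI X = {a..b'}" "b \<le> b'" using ceilI_interval[OF ab(2)] ab by auto
  have sub: "ceilI X \<subseteq> ceil_set F" unfolding ceil_set_def using X by auto
  show "(k \<le> Min X \<and> 0 < Min X) \<or> (\<forall>y\<in>ceilI X. y < k)"
  proof (cases "a < k")
    case True
    have "\<forall>y\<in>ceilI X. y < k"
    proof (rule ccontr)
      assume "\<not> (\<forall>y\<in>ceilI X. y < k)"
      then obtain y where "y \<in> ceilI X" "k \<le> y" by auto
      hence "k \<in> ceilI X" using b' True by auto
      thus False using sub k by auto
    qed
    thus ?thesis by simp
  next
    case False
    have "a \<in> {a..b'}" using b' ab by auto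
    hence "a \<in> ceil_set F" using sub b' by auto
    hence "a \<noteq> k" using k by auto
    hence "k < a" using False by simp
    thus ?thesis using ab by simp
  qed
qed

lemma ceil_set_added_element:
  assumes fin: "finite F" and k: "k \<in> ceil_set F" "k \<notin> F"
  shows "\<exists>a b. {a..b} \<in> runs_of F \<and> a \<le> b \<and> 0 < a \<and> odd (b + 1 - a) \<and> k = b + 1"
proof -
  obtain X where X: "X \<in> runs_of F" "k \<in> ceilI X" using k unfolding ceil_set_def by auto
  obtain a b where ab: "X = {a..b}" "a \<le> b" using X by (auto elim: runs_ofE)
  have "k \<notin> X" using runs_of_subset[OF X(1)] k by auto
  hence "0 < a \<and> odd (b + 1 - a) \<and> k = b + 1" using X(2) unfolding ab ceilI_interval[OF ab(2)]
    by (auto split: if_splits)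
  thus ?thesis using X ab by blast
qed

lemma odd_count_ge_ceil_set_added:
  assumes fin: "finite F" and k: "k \<in> ceil_set F" "k \<notin> F"
  shows "odd (count_ge (ceil_set F) k)"
proof -
  obtain a b where ab: "{a..b} \<in> runs_of F" "a \<le> b" "0 < a" "odd (b + 1 - a)" "k = b + 1"
    using ceil_set_added_element[OF fin k] by blast
  have "even (count_ge (ceil_set F) (Suc k))"
  proof (rule even_count_ge_ceil_set[OF fin], rule ballI)
    fix Y assume Y: "Y \<in> runs_of F"
    obtain c d where cd: "Y = {c..d}" "c \<le> d" using Y by (auto elim: runs_ofE)
    show "(Suc k \<le> Min Y \<and> 0 < Min Y) \<or> (\<forall>y\<in>ceilI Y. y < Suc k)"
    proof (cases "Y = {a..b}")
      case True
      thus ?thesis using ceilI_interval_subset[OF ab(2)] ab(5) by auto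
    next
      case False
      have "Max {a..b} + 1 < Min Y \<or> Max Y + 1 < Min {a..b}" using runs_of_gap[OF ab(1) Y] False by auto
      hence "b + 1 < c \<or> d + 1 < a" using ab cd by simp
      thus ?thesis
      proof
        assume "b + 1 < c" thus ?thesis using ab cd by auto
      next
        assume "d + 1 < a" thus ?thesis using ceilI_interval_subset[OF cd(2)] cd ab by fastforce
      qed
    qed
  qed
  moreover have "count_ge (ceil_set F) k = Suc (count_ge (ceil_set F) (Suc k))"
    using count_ge_Suc_mem[OF finite_ceil_set[OF fin] k(1)] .
  ultimately show ?thesis by simp
qed

lemma paired_ceil_set: assumes fin: "finite F" shows "paired (ceil_set F)"
  unfolding paired_def
proof (intro ballI impI)
  fix k assume k: "k \<in> ceil_set F" "0 < k \<and> odd (count_ge (ceil_set F) k)"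
  show "k - 1 \<in> ceil_set F"
  proof (rule ccontr)
    assume n: "k - 1 \<notin> ceil_set F"
    have "count_ge (ceil_set F) (k - 1) = count_ge (ceil_set F) (Suc (k - 1))"
      using count_ge_Suc_not_mem[OF n] .
    hence "count_ge (ceil_set F) (k - 1) = count_ge (ceil_set F) k" using k by simp
    thus False using even_count_ge_not_in_ceil_set[OF fin n] k by simp
  qed
qed

lemma mem_if_even_count_ge_ceil_set: "finite F \<Longrightarrow> k \<in> ceil_set F \<Longrightarrow> even (count_ge (ceil_set F) k) \<Longrightarrow> k \<in> F"
  using odd_count_ge_ceil_set_added by blast

lemma least_not_in_ceil_set:
  assumes fin: "finite F"
  defines "z \<equiv> LEAST i. i \<notin> ceil_set F"
  shows "z \<notin> ceil_set F" "\<forall>i<z. i \<in> ceil_set F" "\<forall>i<z. i \<in> F" "even (count_ge (ceil_set F) z)"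
proof -
  have ex: "\<exists>i. i \<notin> ceil_set F" using finite_ceil_set[OF fin] infinite_UNIV_nat
    by (metis UNIV_I finite_subset subsetI)
  show zn: "z \<notin> ceil_set F" unfolding z_def using LeastI_ex[OF ex] .
  show zl: "\<forall>i<z. i \<in> ceil_set F" unfolding z_def using not_less_Least by blast
  show "\<forall>i<z. i \<in> F"
  proof (intro allI impI)
    fix i show "i < z \<Longrightarrow> i \<in> F"
    proof (induction i rule: less_induct)
      case (less i)
      show ?case
      proof (rule ccontr)
        assume n: "i \<notin> F"
        have "i \<in> ceil_set F" using zl less by auto
        then obtain a b where ab: "{a..b} \<in> runs_of F" "a \<le> b" "0 < a" "odd (b + 1 - a)" "i = b + 1"
          using ceil_set_added_element[OF fin _ n] by blast
        have "a - 1 < i" using ab by auto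
        hence "a - 1 \<in> F" using less by auto
        moreover have "a - 1 \<notin> F" using ab(1,3) by (auto elim!: runs_ofE)
        ultimately show False by simp
      qed
    qed
  qed
  show "even (count_ge (ceil_set F) z)" using even_count_ge_not_in_ceil_set[OF fin zn] .
qed

lemma count_ge_insert:
  assumes "finite C" "z \<notin> C"
  shows "count_ge (insert z C) k = (if k \<le> z then Suc (count_ge C k) else count_ge C k)"
proof (cases "k \<le> z")
  case True
  have "{x\<in>insert z C. k \<le> x} = insert z {x\<in>C. k \<le> x}" using True by auto
  thus ?thesis using True assms unfolding count_ge_def by simp
next
  case False
  have "{x\<in>insert z C. k \<le> x} = {x\<in>C. k \<le> x}" using False by auto
  thus ?thesis using False unfolding count_ge_def by simp
qed

lemma paired_insert_least_not_in_ceil_set: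
  assumes fin: "finite F"
  defines "z \<equiv> LEAST i. i \<notin> ceil_set F"
  shows "paired (insert z (ceil_set F))"
    "\<forall>k\<in>insert z (ceil_set F). even (count_ge (insert z (ceil_set F)) k) \<longrightarrow> k \<in> F"
proof -
  note zp = least_not_in_ceil_set[OF fin, folded z_def]
  have finC: "finite (ceil_set F)" using finite_ceil_set[OF fin] .
  note ci = count_ge_insert[OF finC zp(1)]
  show "paired (insert z (ceil_set F))" unfolding paired_def
  proof (intro ballI impI)
    fix k assume k: "k \<in> insert z (ceil_set F)" "0 < k \<and> odd (count_ge (insert z (ceil_set F)) k)"
    show "k - 1 \<in> insert z (ceil_set F)"
    proof (cases "k \<le> z")
      case True
      hence "k - 1 < z" using k by auto
      thus ?thesis using zp(2) by auto
    next
      case False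
      hence "k \<in> ceil_set F" "odd (count_ge (ceil_set F) k)" using k ci by auto
      hence "k - 1 \<in> ceil_set F" using paired_ceil_set[OF fin] k unfolding paired_def by auto
      thus ?thesis by simp
    qed
  qed
  show "\<forall>k\<in>insert z (ceil_set F). even (count_ge (insert z (ceil_set F)) k) \<longrightarrow> k \<in> F"
  proof (intro ballI impI)
    fix k assume k: "k \<in> insert z (ceil_set F)" "even (count_ge (insert z (ceil_set F)) k)"
    show "k \<in> F"
    proof (cases "k < z")
      case True thus ?thesis using zp(3) by auto
    next
      case False
      show ?thesis
      proof (cases "k = z")
        case True
        hence "odd (count_ge (insert z (ceil_set F)) k)" using ci zp(4) by simp
        thus ?thesis using k by simp
      next
        case False
        hence "z < k" using \<open>\<not> k < z\<close> by simp
        hence "k \<in> ceil_set F" "even (count_ge (ceil_set F) k)" using k ci by auto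
        thus ?thesis using mem_if_even_count_ge_ceil_set[OF fin] by blast
      qed
    qed
  qed
qed

lemma odd_count_ge_top_Diff:
  assumes fin: "finite S" and pr: "paired S" and R: "\<forall>k\<in>R. even (count_ge S k)"
    and b: "b \<in> S - R" and sb: "Suc b \<notin> S - R"
  shows "odd (count_ge S b)"
proof (cases "Suc b \<in> S")
  case False thus ?thesis using odd_count_ge_run_top[OF fin pr] b by auto
next
  case True
  hence "Suc b \<in> R" using sb by auto
  hence "even (count_ge S (Suc b))" using R by auto
  thus ?thesis using count_ge_Suc_mem[OF fin, of b] b by auto
qed

lemma floor_set_Diff_even_count_ge_subset:
  assumes fin: "finite S" and pr: "paired S" and R: "\<forall>k\<in>R. even (count_ge S k)"
  shows "floor_set (S - R) \<subseteq> S"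
proof
  fix x assume "x \<in> floor_set (S - R)"
  then obtain Y where Y: "Y \<in> runs_of (S - R)" "x \<in> floorI Y" unfolding floor_set_def by auto
  obtain a b where ab: "Y = {a..b}" "a \<le> b" "{a..b} \<subseteq> S - R" "0 < a \<longrightarrow> a - 1 \<notin> S - R" "b + 1 \<notin> S - R"
    using Y(1) by (rule runs_ofE)
  show "x \<in> S"
  proof (cases "a \<le> x")
    case True
    hence "x \<in> {a..b}" using Y(2) floorI_interval_subset[OF ab(2)] ab(1) by auto
    thus ?thesis using ab by auto
  next
    case False
    hence xa: "x = a - 1" "0 < a" "odd (b + 1 - a)" using Y(2) unfolding ab(1) floorI_interval[OF ab(2)]
      by (auto split: if_splits)
    show ?thesis
    proof (rule ccontr)
      assume n: "x \<notin> S"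
      have "a \<in> S" using ab by auto
      hence ea: "even (count_ge S a)" using pr xa n unfolding paired_def by auto
      have "b \<in> S - R" using ab by auto
      hence ob: "odd (count_ge S b)" using odd_count_ge_top_Diff[OF fin pr R] ab by auto
      have "{a..b} \<subseteq> S" using ab by auto
      hence "count_ge S a = count_ge S b + (b - a)" using count_ge_interval[OF fin ab(2)] by auto
      hence "odd (b - a)" using ea ob by auto
      thus False using xa ab by auto
    qed
  qed
qed

lemma subset_floor_set_Diff_even_count_ge:
  assumes fin: "finite S" and pr: "paired S" and R: "\<forall>k\<in>R. even (count_ge S k)"
  shows "S \<subseteq> floor_set (S - R)"
proof
  have finSR: "finite (S - R)" using fin by auto
  fix x assume x: "x \<in> S"
  show "x \<in> floor_set (S - R)"
  proof (cases "x \<in> R")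
    case False
    thus ?thesis using subset_floor_set[OF finSR] x by auto
  next
    case True
    have ex: "even (count_ge S x)" using R True by auto
    have sx: "Suc x \<in> S" using odd_count_ge_run_top[OF fin pr x] ex by auto
    have "odd (count_ge S (Suc x))" using count_ge_Suc_mem[OF fin x] ex by auto
    hence "Suc x \<notin> R" using R by auto
    hence sxR: "Suc x \<in> S - R" using sx by auto
    then obtain Y where Y: "Y \<in> runs_of (S - R)" "Suc x \<in> Y" using runs_of_cover[OF finSR] by blast
    obtain a b where ab: "Y = {a..b}" "a \<le> b" "{a..b} \<subseteq> S - R" "0 < a \<longrightarrow> a - 1 \<notin> S - R" "b + 1 \<notin> S - R"
      using Y(1) by (rule runs_ofE)
    have "a = Suc x"
    proof (rule ccontr)
      assume "a \<noteq> Suc x"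
      hence "a \<le> x" using Y ab by auto
      hence "x \<in> S - R" using ab Y by auto
      thus False using True by auto
    qed
    have "b \<in> S - R" using ab by auto
    hence ob: "odd (count_ge S b)" using odd_count_ge_top_Diff[OF fin pr R] ab by auto
    have "{a..b} \<subseteq> S" using ab by auto
    hence "count_ge S a = count_ge S b + (b - a)" using count_ge_interval[OF fin ab(2)] by auto
    hence "even (b - a)" using ob \<open>odd (count_ge S (Suc x))\<close> \<open>a = Suc x\<close> by auto
    hence "odd (b + 1 - a)" using ab by auto
    hence "x \<in> floorI Y" unfolding ab(1) floorI_interval[OF ab(2)] using \<open>a = Suc x\<close> ab by auto
    thus ?thesis unfolding floor_set_def using Y by auto
  qed
qed

lemma floor_set_Diff_even_count_ge:
  assumes "finite S" "paired S" "\<forall>k\<in>R. even (count_ge S k)"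
  shows "floor_set (S - R) = S"
  using floor_set_Diff_even_count_ge_subset[OF assms] subset_floor_set_Diff_even_count_ge[OF assms]
  by (rule equalityI)

definition dec_list :: "nat set \<Rightarrow> nat list" where
  "dec_list S = rev (sorted_list_of_set S)"

lemma dec_supp_eq_dec_list: "dec_supp s = dec_list (ssupp s)"
  unfolding dec_supp_def dec_list_def ..

lemma length_dec_list: "finite S \<Longrightarrow> length (dec_list S) = card S"
  unfolding dec_list_def by simp

lemma dec_list_nth:
  assumes fin: "finite S" and i: "i < card S"
  shows "dec_list S ! i \<in> S \<and> count_ge S (dec_list S ! i) = Suc i"
proof -
  define L where "L = sorted_list_of_set S"
  define n where "n = card S"
  have sl: "sorted_wrt (<) L" unfolding L_def by simp
  have setL: "set L = S" unfolding L_def using fin by simp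
  have lenL: "length L = n" unfolding L_def n_def by simp
  define p where "p = n - Suc i"
  have p: "p < n" unfolding p_def using i n_def by simp
  have di: "dec_list S ! i = L ! p" unfolding dec_list_def L_def[symmetric] p_def using i lenL n_def
    by (simp add: rev_nth)
  have mono: "L ! q < L ! r" if "q < r" "r < n" for q r
    using sorted_wrt_nth_less[OF sl that(1)] that lenL by simp
  have eq: "{x\<in>S. L ! p \<le> x} = (\<lambda>q. L ! q) ` {p..<n}"
  proof
    show "{x\<in>S. L ! p \<le> x} \<subseteq> (\<lambda>q. L ! q) ` {p..<n}"
    proof
      fix x assume x: "x \<in> {x\<in>S. L ! p \<le> x}"
      then obtain q where q: "q < n" "x = L ! q" using setL lenL by (auto simp: in_set_conv_nth)
      have "p \<le> q"
      proof (rule ccontr)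
        assume "\<not> p \<le> q" hence "L ! q < L ! p" using mono p by auto
        thus False using x q by auto
      qed
      thus "x \<in> (\<lambda>q. L ! q) ` {p..<n}" using q by auto
    qed
    show "(\<lambda>q. L ! q) ` {p..<n} \<subseteq> {x\<in>S. L ! p \<le> x}"
    proof
      fix x assume "x \<in> (\<lambda>q. L ! q) ` {p..<n}"
      then obtain q where q: "p \<le> q" "q < n" "x = L ! q" by auto
      have "L ! p \<le> L ! q" using mono[of p q] q by (cases "p = q") auto
      moreover have "L ! q \<in> S" using setL lenL q by auto
      ultimately show "x \<in> {x\<in>S. L ! p \<le> x}" using q by auto
    qed
  qed
  have inj: "inj_on (\<lambda>q. L ! q) {p..<n}"
  proof (rule inj_onI)
    fix q r assume "q \<in> {p..<n}" "r \<in> {p..<n}" "L ! q = L ! r"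
    thus "q = r" using mono[of q r] mono[of r q] by (metis atLeastLessThan_iff less_irrefl linorder_neqE_nat)
  qed
  have "count_ge S (L ! p) = n - p" unfolding count_ge_def eq card_image[OF inj] by simp
  hence "count_ge S (L ! p) = Suc i" unfolding p_def using i n_def by simp
  moreover have "L ! p \<in> S" using setL lenL p by auto
  ultimately show ?thesis using di by simp
qed

lemma count_ge_mono: "finite B \<Longrightarrow> A \<subseteq> B \<Longrightarrow> count_ge A k \<le> count_ge B k"
  unfolding count_ge_def by (rule card_mono) auto

lemma dec_list_strict:
  assumes fin: "finite S" and ij: "i < j" "j < card S"
  shows "dec_list S ! j < dec_list S ! i"
proof (rule ccontr)
  assume "\<not> dec_list S ! j < dec_list S ! i"
  hence le: "dec_list S ! i \<le> dec_list S ! j" by simp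
  have "count_ge S (dec_list S ! j) \<le> count_ge S (dec_list S ! i)" unfolding count_ge_def
    by (rule card_mono) (use fin le in auto)
  thus False using dec_list_nth[OF fin] ij by (metis Suc_le_mono leD less_trans)
qed

lemma set_dec_list: "finite S \<Longrightarrow> set (dec_list S) = S"
  unfolding dec_list_def by simp

lemma dec_list_mono:
  assumes finB: "finite B" and AB: "A \<subseteq> B" and i: "i < card A"
  shows "dec_list A ! i \<le> dec_list B ! i"
proof (rule ccontr)
  have finA: "finite A" using finB AB finite_subset by auto
  have iB: "i < card B" using i card_mono[OF finB AB] by linarith
  define x where "x = dec_list A ! i"
  define y where "y = dec_list B ! i"
  have x: "x \<in> A" "count_ge A x = Suc i" using dec_list_nth[OF finA i] unfolding x_def by auto
  have y: "y \<in> B" "count_ge B y = Suc i" using dec_list_nth[OF finB iB] unfolding y_def by auto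
  assume "\<not> x \<le> y"
  hence yx: "y < x" by simp
  have "{z\<in>B. x \<le> z} \<subseteq> {z\<in>B. y \<le> z} - {y}" using yx by auto
  hence "count_ge B x \<le> card ({z\<in>B. y \<le> z} - {y})"
    unfolding count_ge_def by (rule card_mono[rotated]) (use finB in auto)
  also have "\<dots> = count_ge B y - 1" unfolding count_ge_def using y finB by (simp add: card_Diff_singleton)
  finally have "count_ge B x \<le> i" using y by simp
  moreover have "count_ge A x \<le> count_ge B x" by (rule count_ge_mono[OF finB AB])
  ultimately show False using x by simp
qed

lemma of_supp_SSplus: "finite A \<Longrightarrow> of_supp A \<in> SSplus"
  using ssupp_of_supp[of A] unfolding SSplus_def SS_def by (auto simp: of_supp_def)

lemma Sign_eq_of_supp:
  assumes "\<forall>n\<in>A. coeff p n > 0" "\<forall>n. n \<notin> A \<longrightarrow> coeff p n = 0"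
  shows "Sign p = of_supp A"
proof
  fix i show "Sign p i = of_supp A i"
    unfolding Sign_def of_supp_def using assms by (cases "i \<in> A") auto
qed

lemma Sign_eq_of_supp_nonzero_coeffs: "nonneg_poly p \<Longrightarrow> Sign p = of_supp {n. coeff p n \<noteq> 0}"
  unfolding nonneg_poly_def by (rule Sign_eq_of_supp) (auto simp: order_le_less)

lemma paired_floor_set_eq: "finite S \<Longrightarrow> paired S \<Longrightarrow> floor_set S = S"
  unfolding floor_set_def using paired_floorI Union_runs_of by (metis (no_types, lifting) SUP_cong image_ident)

lemma dd_of_supp_paired: "finite S \<Longrightarrow> paired S \<Longrightarrow> dd (of_supp S) = card S"
  using dd_eq_weight[OF of_supp_SSplus] paired_weight_eq by simp

lemma of_supp_paired_SSplus_circ: "finite S \<Longrightarrow> paired S \<Longrightarrow> of_supp S \<in> SSplus_circ"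
  unfolding SSplus_circ_def using dd_of_supp_paired of_supp_SSplus by simp

lemma preceq0_of_supp_subset:
  assumes "finite B" "A \<subseteq> B" "paired A" "paired B"
  shows "preceq0 (of_supp A) (of_supp B)"
proof -
  have fA: "finite A" using assms finite_subset by auto
  show ?thesis unfolding preceq0_def dec_supp_eq_dec_list ssupp_of_supp
    using of_supp_paired_SSplus_circ[OF fA assms(3)] of_supp_paired_SSplus_circ[OF assms(1,4)]
      length_dec_list[OF fA] length_dec_list[OF assms(1)]
      card_mono[OF assms(1,2)] dec_list_mono[OF assms(1,2)] by auto
qed

lemma exists_paired_support:
  fixes f :: "real poly" and m :: nat
  assumes hf: "nonneg_poly f" and hd: "ddpoly f \<in> {m, m + 1}"
  defines "s \<equiv> (if ddpoly f = m then splus (sceil (Sign f)) else sceil (Sign f))"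
  shows "\<exists>S. s = of_supp S \<and> finite S \<and> card S = m + 1 \<and> paired S \<and> ssupp (Sign f) \<subseteq> S
      \<and> (\<forall>k\<in>S. even (count_ge S k) \<longrightarrow> k \<in> ssupp (Sign f)) \<and> spreceq (Sign f) s"
proof -
  define F where "F = ssupp (Sign f)"
  have SF: "Sign f = of_supp F" unfolding F_def using Sign_eq_of_supp_nonzero_coeffs[OF hf] by simp
  have finF: "finite F" unfolding F_def
    using Sign_eq_of_supp_nonzero_coeffs[OF hf] finite_nonzero_coeffs by simp
  define C where "C = ceil_set F"
  have finC: "finite C" unfolding C_def using finite_ceil_set[OF finF] .
  have prC: "paired C" unfolding C_def using paired_ceil_set[OF finF] .
  have FC: "F \<subseteq> C" unfolding C_def using subset_ceil_set[OF finF] .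
  have sc: "sceil (Sign f) = of_supp C" unfolding C_def sceil_eq_ceil_set SF by simp
  have SFplus: "Sign f \<in> SSplus" using SF of_supp_SSplus[OF finF] by simp
  have ddC: "ddpoly f = card C" unfolding ddpoly_def dd_eq_weight[OF SFplus] C_def card_ceil_set[OF finF]
    F_def[symmetric] ..
  have prec: "spreceq (Sign f) (of_supp S)" if S: "finite S" "paired S" "C \<subseteq> S" for S
  proof -
    have "preceq0 (sceil (Sign f)) (sfloor (of_supp S))"
      unfolding sc sfloor_eq_floor_set ssupp_of_supp paired_floor_set_eq[OF S(1,2)]
      by (rule preceq0_of_supp_subset[OF S(1) S(3) prC S(2)])
    thus ?thesis unfolding spreceq_def using SFplus of_supp_SSplus[OF S(1)] by auto
  qed
  show ?thesis
  proof (cases "ddpoly f = m")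
    case True
    define z where "z = (LEAST i. i \<notin> C)"
    have zeq: "(LEAST i. of_supp C i = Zer) = z" unfolding z_def of_supp_def by simp
    have s: "s = of_supp (insert z C)" unfolding s_def using True
      by (simp add: sc splus_def zeq)
    note zp = least_not_in_ceil_set[OF finF, folded C_def, folded z_def]
    note sp = paired_insert_least_not_in_ceil_set[OF finF, folded C_def, folded z_def]
    have fin: "finite (insert z C)" using finC by simp
    have card: "card (insert z C) = m + 1" using zp(1) finC ddC True by (simp add: z_def)
    show ?thesis using s fin card sp FC prec[OF fin sp(1)] F_def by (intro exI[of _ "insert z C"]) auto
  next
    case False
    hence "ddpoly f = m + 1" using hd by simp
    hence card: "card C = m + 1" using ddC by simp
    have s: "s = of_supp C" unfolding s_def using False sc by simp
    have ev: "\<forall>k\<in>C. even (count_ge C k) \<longrightarrow> k \<in> F" unfolding C_def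
      using mem_if_even_count_ge_ceil_set[OF finF] by blast
    show ?thesis using s finC card prC FC ev prec[OF finC prC] F_def by (intro exI[of _ C]) auto
  qed
qed

lemma dec_list_enumerates:
  assumes fin: "finite S" and card: "card S = n"
  defines "d \<equiv> \<lambda>j. dec_list S ! (j - 1)"
  shows "S = d ` {1..n}" and "\<And>j. j \<in> {1..n} \<Longrightarrow> count_ge S (d j) = j"
    and "\<And>j k. 1 \<le> j \<Longrightarrow> j < k \<Longrightarrow> k \<le> n \<Longrightarrow> d k < d j"
proof -
  have nth: "d j \<in> S \<and> count_ge S (d j) = j" if "j \<in> {1..n}" for j
    using dec_list_nth[OF fin, of "j - 1"] that card unfolding d_def by auto
  thus "count_ge S (d j) = j" if "j \<in> {1..n}" for j using that by blast
  show "d k < d j" if "1 \<le> j" "j < k" "k \<le> n" for j k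
    using dec_list_strict[OF fin, of "j - 1" "k - 1"] that card unfolding d_def by simp
  show "S = d ` {1..n}"
  proof
    show "d ` {1..n} \<subseteq> S" using nth by auto
    show "S \<subseteq> d ` {1..n}"
    proof
      fix x assume "x \<in> S"
      then obtain i where "i < n" "x = dec_list S ! i"
        using set_dec_list[OF fin] length_dec_list[OF fin] card by (metis in_set_conv_nth)
      hence "Suc i \<in> {1..n}" "x = d (Suc i)" unfolding d_def by auto
      thus "x \<in> d ` {1..n}" by blast
    qed
  qed
qed

lemma sprec_of_supp_remove_even:
  assumes fin: "finite S" and pr: "paired S" and sub: "S' \<subset> S"
    and even: "\<And>k. k \<in> S - S' \<Longrightarrow> even (count_ge S k)"
  shows "sprec (of_supp S) (of_supp S')" and "dd (of_supp S') = card S" and "dd (of_supp S) = card S"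
proof -
  have fin': "finite S'" using sub fin finite_subset by blast
  have "floor_set S' = S"
    using floor_set_Diff_even_count_ge[OF fin pr, of "S - S'"] even sub
      by (simp add: Diff_Diff_Int Int_absorb1 less_imp_le)
  hence "sfloor (of_supp S') = of_supp S" by (simp add: sfloor_eq_floor_set)
  moreover have "sceil (of_supp S) = of_supp S" by (simp add: sceil_eq_ceil_set paired_ceil_set_eq[OF fin pr])
  moreover have "preceq0 (of_supp S) (of_supp S)" by (rule preceq0_of_supp_subset[OF fin subset_refl pr pr])
  moreover have "of_supp S \<noteq> of_supp S'" using sub by (metis ssupp_of_supp less_irrefl)
  ultimately show "sprec (of_supp S) (of_supp S')"
    unfolding sprec_def spreceq_def using of_supp_SSplus fin fin' by auto
  show "dd (of_supp S') = card S"
    using dd_eq_weight[OF of_supp_SSplus[OF fin']] card_floor_set[OF fin'] \<open>floor_set S' = S\<close> by simp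
  show "dd (of_supp S) = card S" by (rule dd_of_supp_paired[OF fin pr])
qed

section \<open>The perturbation \<open>f + t h\<close>\<close>

locale perturbation = nodes_exponents +
  fixes f :: "real poly" and c :: "nat \<Rightarrow> real"
  assumes f_nonneg: "nonneg_poly f"
    and f_support: "\<And>n. coeff f n \<noteq> 0 \<Longrightarrow> n \<in> d ` {1..m+1}"
    and f_even_coeffs: "\<And>j. j \<in> {1..m+1} \<Longrightarrow> even j \<Longrightarrow> coeff f (d j) \<noteq> 0"
    and c_vanishes: "vanishes c" and c_1_pos: "0 < c 1"
begin

definition step :: real where
  "step = Min ((\<lambda>i. \<bar>coeff f (d (2 * i)) / c (2 * i)\<bar>) ` {1..(m + 1) div 2})"

definition g :: "real poly" where
  "g = f + smult step (comb c)"

lemma f_eq_comb: "f = comb (\<lambda>j. coeff f (d j))"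
  unfolding comb_def by (rule poly_eq_sum_monom_coeff[OF _ inj_on_d f_support]) simp

lemma even_index_facts:
  assumes "i \<in> {1..(m + 1) div 2}"
  shows "2 * i \<in> {1..m+1}" and "0 < coeff f (d (2 * i))" and "c (2 * i) < 0"
proof -
  show j: "2 * i \<in> {1..m+1}" using assms by auto
  show "0 < coeff f (d (2 * i))"
    using f_even_coeffs[OF j] f_nonneg unfolding nonneg_poly_def by (simp add: order_less_le)
  show "c (2 * i) < 0" using vanishes_coeff_signs(2)[OF c_vanishes c_1_pos j] by simp
qed

lemma abs_quotient_even_index:
  "i \<in> {1..(m + 1) div 2} \<Longrightarrow> \<bar>coeff f (d (2 * i)) / c (2 * i)\<bar> = coeff f (d (2 * i)) / - c (2 * i)"
  using even_index_facts[of i] by (simp add: abs_divide)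

lemma step_le: "i \<in> {1..(m + 1) div 2} \<Longrightarrow> step \<le> coeff f (d (2 * i)) / - c (2 * i)"
  unfolding step_def abs_quotient_even_index[symmetric] by (rule Min_le) auto

lemma step_attained: "\<exists>i\<in>{1..(m + 1) div 2}. step = coeff f (d (2 * i)) / - c (2 * i)"
proof -
  have "{1..(m + 1) div 2} \<noteq> {}" using m_pos by auto
  hence "step \<in> (\<lambda>i. \<bar>coeff f (d (2 * i)) / c (2 * i)\<bar>) ` {1..(m + 1) div 2}"
    unfolding step_def by (intro Min_in) auto
  thus ?thesis using abs_quotient_even_index by auto
qed

lemma step_pos: "0 < step"
proof -
  obtain i where "i \<in> {1..(m + 1) div 2}" "step = coeff f (d (2 * i)) / - c (2 * i)"
    using step_attained by blast
  thus ?thesis using even_index_facts[of i] by (simp add: divide_pos_neg)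
qed

lemma coeff_g: "coeff g n = coeff f n + step * coeff (comb c) n"
  unfolding g_def by simp

lemma coeff_g_odd: "j \<in> {1..m+1} \<Longrightarrow> odd j \<Longrightarrow> 0 < coeff g (d j)"
  using vanishes_coeff_signs(1)[OF c_vanishes c_1_pos] step_pos f_nonneg
  unfolding coeff_g coeff_comb nonneg_poly_def by (simp add: add_nonneg_pos)

lemma coeff_g_even:
  assumes i: "i \<in> {1..(m + 1) div 2}"
  shows "0 \<le> coeff g (d (2 * i))"
proof -
  have "0 < - c (2 * i)" using even_index_facts(3)[OF i] by simp
  hence "step * - c (2 * i) \<le> coeff f (d (2 * i))" using step_le[OF i] by (simp only: pos_le_divide_eq)
  thus ?thesis unfolding coeff_g coeff_comb[OF even_index_facts(1)[OF i]] by simp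
qed

lemma coeff_g_notin: "n \<notin> d ` {1..m+1} \<Longrightarrow> coeff g n = 0"
  using f_support coeff_comb_notin unfolding coeff_g by auto

lemma g_nonneg: "nonneg_poly g"
  unfolding nonneg_poly_def
proof
  fix n
  show "0 \<le> coeff g n"
  proof (cases "n \<in> d ` {1..m+1}")
    case True
    then obtain j where j: "j \<in> {1..m+1}" "n = d j" by blast
    show ?thesis
    proof (cases "even j")
      case True
      then obtain i where "j = 2 * i" by blast
      thus ?thesis using coeff_g_even[of i] j by auto
    qed (use coeff_g_odd j in \<open>auto intro: less_imp_le\<close>)
  qed (simp add: coeff_g_notin)
qed

lemma poly_g_at_nodes: "i \<in> {1..m} \<Longrightarrow> poly g (a i) = poly f (a i)"
  unfolding g_def using comb_vanishes_at_nodes[OF c_vanishes] by simp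

lemma poly_g_beyond_nodes: "a m < x \<Longrightarrow> poly f x < poly g x"
  unfolding g_def using vanishes_comb_pos_beyond_nodes[OF c_vanishes c_1_pos] step_pos by simp

lemma support_g:
  shows "{n. coeff g n \<noteq> 0} \<subset> d ` {1..m+1}"
    and "d ` {1..m+1} - {n. coeff g n \<noteq> 0} \<subseteq> {d (2 * i) | i. 1 \<le> 2 * i \<and> 2 * i \<le> m + 1}"
proof -
  show "d ` {1..m+1} - {n. coeff g n \<noteq> 0} \<subseteq> {d (2 * i) | i. 1 \<le> 2 * i \<and> 2 * i \<le> m + 1}"
  proof
    fix n assume "n \<in> d ` {1..m+1} - {n. coeff g n \<noteq> 0}"
    then obtain j where j: "j \<in> {1..m+1}" "n = d j" "coeff g (d j) = 0" by blast
    then obtain i where "j = 2 * i" using coeff_g_odd[OF j(1)] by (metis evenE less_irrefl)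
    thus "n \<in> {d (2 * i) | i. 1 \<le> 2 * i \<and> 2 * i \<le> m + 1}" using j by auto
  qed
  obtain i where "i \<in> {1..(m + 1) div 2}" "step = coeff f (d (2 * i)) / - c (2 * i)"
    using step_attained by blast
  moreover have "coeff (comb c) (d (2 * i)) = c (2 * i)"
    using coeff_comb[OF even_index_facts(1)] \<open>i \<in> {1..(m + 1) div 2}\<close> by blast
  ultimately have "coeff g (d (2 * i)) = 0" "2 * i \<in> {1..m+1}"
    using even_index_facts[of i] unfolding coeff_g by simp_all
  thus "{n. coeff g n \<noteq> 0} \<subset> d ` {1..m+1}" using coeff_g_notin by blast
qed

lemma Sign_between_f_g:
  assumes "0 < u" "u < 1"
  shows "Sign (smult (1 - u) f + smult u g) = of_supp (d ` {1..m+1})"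
proof (rule Sign_eq_of_supp)
  have coeff: "coeff (smult (1 - u) f + smult u g) n = (1 - u) * coeff f n + u * coeff g n" for n
    by simp
  show "\<forall>n. n \<notin> d ` {1..m+1} \<longrightarrow> coeff (smult (1 - u) f + smult u g) n = 0"
    using f_support coeff_g_notin coeff by auto
  show "\<forall>n\<in>d ` {1..m+1}. 0 < coeff (smult (1 - u) f + smult u g) n"
  proof
    fix n assume "n \<in> d ` {1..m+1}"
    then obtain j where j: "j \<in> {1..m+1}" "n = d j" by blast
    have "0 < coeff f n \<or> 0 < coeff g n"
    proof (cases "even j")
      case True
      thus ?thesis using f_even_coeffs[OF j(1)] f_nonneg j(2) unfolding nonneg_poly_def
        by (simp add: order_less_le)
    qed (use coeff_g_odd j in simp)
    moreover have "0 \<le> coeff f n" "0 \<le> coeff g n" using f_nonneg g_nonneg unfolding nonneg_poly_def by auto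
    ultimately show "0 < coeff (smult (1 - u) f + smult u g) n"
      unfolding coeff using assms by (auto intro: add_pos_nonneg add_nonneg_pos)
  qed
qed

lemma perturbation_properties:
  assumes S: "S = d ` {1..m+1}" "paired S" "\<And>j. j \<in> {1..m+1} \<Longrightarrow> count_ge S (d j) = j"
    and prec: "spreceq (Sign f) (of_supp S)"
  shows "let h = (\<Sum>j = 1..m+1. monom (c j) (d j)); e = (\<lambda>j. coeff f (d j));
           t = Min ((\<lambda>i. \<bar>e (2 * i) / c (2 * i)\<bar>) ` {1..(m + 1) div 2}); g = f + smult t h; s' = Sign g
       in f = (\<Sum>j = 1..m+1. monom (e j) (d j)) \<and> nonneg_poly g \<and> (\<forall>i \<in> {1..(m + 1) div 2}. c (2 * i) \<noteq> 0)
          \<and> (\<forall>i \<in> {1..m}. poly g (a i) = poly f (a i)) \<and> ssupp s' \<subset> S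
          \<and> S - ssupp s' \<subseteq> {d (2 * i) | i. 1 \<le> 2 * i \<and> 2 * i \<le> m + 1}
          \<and> spreceq (Sign f) (of_supp S) \<and> sprec (of_supp S) s' \<and> dd s' = m + 1 \<and> dd (of_supp S) = m + 1
          \<and> card (ssupp s') \<le> m \<and> (\<forall>x. x > a m \<longrightarrow> poly g x > poly f x)
          \<and> (\<forall>u::real. 0 < u \<and> u < 1 \<longrightarrow> Sign (smult (1 - u) f + smult u g) = of_supp S)"
proof -
  have fin: "finite S" and card: "card S = m + 1" using S(1) card_image[OF inj_on_d] by auto
  define S' where "S' = {n. coeff g n \<noteq> 0}"
  have s': "Sign g = of_supp S'" unfolding S'_def by (rule Sign_eq_of_supp_nonzero_coeffs[OF g_nonneg])
  have S'_sub: "S' \<subset> S" "S - S' \<subseteq> {d (2 * i) | i. 1 \<le> 2 * i \<and> 2 * i \<le> m + 1}"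
    unfolding S'_def S(1) by (rule support_g(1), rule support_g(2))
  have "even (count_ge S k)" if "k \<in> S - S'" for k
    using S'_sub(2) that S(3) by fastforce
  note sprec = sprec_of_supp_remove_even[OF fin S(2) S'_sub(1) this]
  have "card S' \<le> m" using psubset_card_mono[OF fin S'_sub(1)] card by simp
  moreover have "\<forall>i\<in>{1..(m + 1) div 2}. c (2 * i) \<noteq> 0" using even_index_facts(3) by fastforce
  ultimately show ?thesis
    unfolding Let_def comb_def[symmetric] step_def[symmetric] g_def[symmetric] s' ssupp_of_supp
    using f_eq_comb g_nonneg poly_g_at_nodes S'_sub sprec card prec poly_g_beyond_nodes Sign_between_f_g S(1)
    by auto
qed

end

theorem mainTheorem15:
  fixes m :: nat and a :: "nat \<Rightarrow> real" and f :: "real poly"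
  assumes hm: "m \<ge> 1"
    and ha0: "0 < a 1"
    and hamono: "\<And>i j. 1 \<le> i \<Longrightarrow> i < j \<Longrightarrow> j \<le> m \<Longrightarrow> a i < a j"
    and hf: "nonneg_poly f"
    and hd: "ddpoly f \<in> {m, m + 1}"
  defines "s \<equiv> (if ddpoly f = m then splus (sceil (Sign f)) else sceil (Sign f))"
  defines "d \<equiv> (\<lambda>j::nat. dec_supp s ! (j - 1))"
  shows "card (ssupp s) = m + 1
    \<and> ssupp s = d ` {1..m+1}
    \<and> (\<forall>j k. 1 \<le> j \<and> j < k \<and> k \<le> m + 1 \<longrightarrow> d j > d k)
    \<and> (\<exists>c :: nat \<Rightarrow> real. (\<forall>i \<in> {1..m}. (\<Sum>j = 1..m+1. c j * a i ^ d j) = 0) \<and> c 1 > 0)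
    \<and> (\<forall>c :: nat \<Rightarrow> real. (\<forall>i \<in> {1..m}. (\<Sum>j = 1..m+1. c j * a i ^ d j) = 0) \<and> c 1 > 0 \<longrightarrow>
        (let h = (\<Sum>j = 1..m+1. monom (c j) (d j));
             e = (\<lambda>j. coeff f (d j));
             t = Min ((\<lambda>i. \<bar>e (2 * i) / c (2 * i)\<bar>) ` {1..(m + 1) div 2});
             g = f + smult t h;
             s' = Sign g
         in f = (\<Sum>j = 1..m+1. monom (e j) (d j))
          \<and> nonneg_poly g \<and> (\<forall>i \<in> {1..(m + 1) div 2}. c (2 * i) \<noteq> 0)
          \<and> (\<forall>i \<in> {1..m}. poly g (a i) = poly f (a i))
          \<and> ssupp s' \<subset> ssupp s
          \<and> ssupp s - ssupp s' \<subseteq> {d (2 * i) | i. 1 \<le> 2 * i \<and> 2 * i \<le> m + 1}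
          \<and> spreceq (Sign f) s \<and> sprec s s'
          \<and> dd s' = m + 1 \<and> dd s = m + 1
          \<and> card (ssupp s') \<le> m
          \<and> (\<forall>x. x > a m \<longrightarrow> poly g x > poly f x)
          \<and> (\<forall>u::real. 0 < u \<and> u < 1 \<longrightarrow> Sign (smult (1 - u) f + smult u g) = s)))"
proof -
  obtain S where S: "s = of_supp S" "finite S" "card S = m + 1" "paired S" "ssupp (Sign f) \<subseteq> S"
      "\<forall>k\<in>S. even (count_ge S k) \<longrightarrow> k \<in> ssupp (Sign f)" "spreceq (Sign f) s"
    using exists_paired_support[OF hf hd, folded s_def] by blast
  have d_eq: "d = (\<lambda>j. dec_list S ! (j - 1))"
    unfolding d_def S(1) dec_supp_eq_dec_list ssupp_of_supp ..
  have enum: "S = d ` {1..m+1}" "\<And>j. j \<in> {1..m+1} \<Longrightarrow> count_ge S (d j) = j"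
    "\<And>j k. 1 \<le> j \<Longrightarrow> j < k \<Longrightarrow> k \<le> m + 1 \<Longrightarrow> d k < d j"
    unfolding d_eq using dec_list_enumerates[OF S(2,3)] by auto
  interpret nodes_exponents m a d
    using hm ha0 hamono enum(3) by unfold_locales auto
  have supp_f: "ssupp (Sign f) = {n. coeff f n \<noteq> 0}"
    using Sign_eq_of_supp_nonzero_coeffs[OF hf] by simp
  have perturb: "perturbation m a d f c" if "vanishes c" "0 < c 1" for c
    using hf S(5,6) enum(1,2) that supp_f by unfold_locales auto
  show ?thesis (is "?card \<and> ?supp \<and> ?decreasing \<and> ?exists \<and> (\<forall>c. ?vanishes c \<longrightarrow> ?properties c)")
  proof (intro conjI)
    show ?card ?supp using S(1,3) enum(1) by simp_all
    show ?decreasing using enum(3) by blast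
    show ?exists using exists_vanishes unfolding vanishes_def by blast
    show "\<forall>c. ?vanishes c \<longrightarrow> ?properties c"
    proof (intro allI impI)
      fix c assume "?vanishes c"
      hence "vanishes c" "0 < c 1" unfolding vanishes_def by auto
      from perturbation.perturbation_properties[OF perturb[OF this] enum(1) S(4) enum(2) S(7)[unfolded S(1)]]
      show "?properties c" unfolding S(1) ssupp_of_supp .
    qed
  qed
qed

end
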